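(* Let $\lambda$ be a partition with $\lambda_1$ columns of lengths $\lambda^t_1,\dots,\lambda^t_{\lambda_1}$, and let $\vartheta$ be any statistic of non-orientability (defined on $\lambda$-injectively decorated maps and on $1^m$-injectively decorated maps). Then $$F^{(0)}_{\lambda,\vartheta}=\prod_{1\le i\le\lambda_1}F^{(0)}_{1^{\lambda^t_i},\vartheta}.$$
   Context: Maps: unordered collections of connected graphs embedded in compact surfaces (orientable or not) with disc faces, up to homeomorphism; bipartite = white/black vertices with every edge joining different colors; $\mathrm{type}(M)$ = partition of the number of edges given by half-degrees of faces; $|\mathcal V_\circ(M)|$ = number of white vertices, $\mathrm{cc}(M)$ = number of components. Rooted: each component has a distinguished oriented white corner, the root edge following it. $\lambda$ is identified with its Young diagram (boxes $(i,j)$, row $i$, column $j$), boxes ordered lexicographically. A $\lambda$-injectively decorated map is a bipartite map with an injective function from edges to boxes such that edges sharing a black vertex go to one row and edges sharing a white vertex go to one column; rooted if each root edge carries the smallest box used in its component. $\mathrm{ID}_n(\lambda)$ = rooted such maps of size $n$. A statistic of non-orientability is nonnegative-integer valued and vanishes exactly on orientable maps. With $b=\alpha-1$, $F^{(\alpha)}_{\lambda,\vartheta}(\mathbf p)=\sum_{M\in\mathrm{ID}_{|\lambda|}(\lambda)}(-1)^{|\lambda|-|\mathcal V_\circ(M)|}\alpha^{|\mathcal V_\circ(M)|-\mathrm{cc}(M)}b^{\vartheta(M)}p_{\mathrm{type}(M)}$, whose coefficients are polynomials in $\alpha$; $F^{(0)}_{\lambda,\vartheta}$ denotes its specialization at $\alpha=0$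 (so $b=-1$). *)

theory Defs
  imports Main
begin

text \<open>Combinatorial maps (orientable or not) encoded as flag systems:
  a finite set of flags with three fixed-point-free involutions a0, a1, a2
  such that a0 a2 = a2 a0 is fixed-point-free.  Vertices are orbits of
  <a1,a2>, edges orbits of <a0,a2> (4 flags each), faces orbits of <a0,a1>
  (a face of degree d has 2d flags), components orbits of <a0,a1,a2>.
  A bipartite map carries a white/black colouring of flags constant on
  vertices and swapped along edges; a root is a flag at a white vertex
  (an oriented white corner, whose edge is the root edge); a decoration
  assigns a box to each flag, constant on edges.\<close>

record dmap =
  flags :: "nat set"
  a0 :: "nat \<Rightarrow> nat"
  a1 :: "nat \<Rightarrow> nat"
  a2 :: "nat \<Rightarrow> nat"
  white :: "nat \<Rightarrow> bool"
  root :: "nat set"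
  dec :: "nat \<Rightarrow> nat \<times> nat"

definition orb :: "nat set \<Rightarrow> (nat \<Rightarrow> nat) set \<Rightarrow> nat \<Rightarrow> nat set" where
  "orb D fs x = {y. (x, y) \<in> {(u, f u) | u f. u \<in> D \<and> f \<in> fs}\<^sup>*}"

definition vertex :: "dmap \<Rightarrow> nat \<Rightarrow> nat set" where
  "vertex M x = orb (flags M) {a1 M, a2 M} x"
definition edge :: "dmap \<Rightarrow> nat \<Rightarrow> nat set" where
  "edge M x = orb (flags M) {a0 M, a2 M} x"
definition face :: "dmap \<Rightarrow> nat \<Rightarrow> nat set" where
  "face M x = orb (flags M) {a0 M, a1 M} x"
definition comp :: "dmap \<Rightarrow> nat \<Rightarrow> nat set" where
  "comp M x = orb (flags M) {a0 M, a1 M, a2 M} x"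

definition is_map :: "dmap \<Rightarrow> bool" where
  "is_map M \<longleftrightarrow> finite (flags M) \<and>
     (\<forall>x\<in>flags M. \<forall>f\<in>{a0 M, a1 M, a2 M}. f x \<in> flags M \<and> f (f x) = x \<and> f x \<noteq> x) \<and>
     (\<forall>x\<in>flags M. a0 M (a2 M x) = a2 M (a0 M x) \<and> a0 M (a2 M x) \<noteq> x)"

definition orientable :: "dmap \<Rightarrow> bool" where
  "orientable M \<longleftrightarrow> (\<exists>s::nat \<Rightarrow> bool. \<forall>x\<in>flags M.
      s (a0 M x) \<noteq> s x \<and> s (a1 M x) \<noteq> s x \<and> s (a2 M x) \<noteq> s x)"

definition is_bipartite :: "dmap \<Rightarrow> bool" where
  "is_bipartite M \<longleftrightarrow> (\<forall>x\<in>flags M. white M (a1 M x) = white M x \<and>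
      white M (a2 M x) = white M x \<and> white M (a0 M x) \<noteq> white M x)"

definition is_rooted :: "dmap \<Rightarrow> bool" where
  "is_rooted M \<longleftrightarrow> root M \<subseteq> flags M \<and> (\<forall>r\<in>root M. white M r) \<and>
      (\<forall>x\<in>flags M. \<exists>!r. r \<in> root M \<and> r \<in> comp M x)"

text \<open>Partitions as weakly decreasing lists of positive integers;
  boxes (i,j) with row i and column j, 1-based.\<close>

definition is_partition :: "nat list \<Rightarrow> bool" where
  "is_partition lam \<longleftrightarrow> sorted (rev lam) \<and> 0 \<notin> set lam"

definition boxes :: "nat list \<Rightarrow> (nat \<times> nat) set" where
  "boxes lam = {(i, j). 1 \<le> i \<and> i \<le> length lam \<and> 1 \<le> j \<and> j \<le> lam ! (i - 1)}"

definition conj_part :: "nat list \<Rightarrow> nat \<Rightarrow> nat" where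
  "conj_part lam j = length (filter (\<lambda>l. j \<le> l) lam)"

definition ncols :: "nat list \<Rightarrow> nat" where
  "ncols lam = (if lam = [] then 0 else hd lam)"

definition lex_le :: "nat \<times> nat \<Rightarrow> nat \<times> nat \<Rightarrow> bool" where
  "lex_le b c \<longleftrightarrow> fst b < fst c \<or> (fst b = fst c \<and> snd b \<le> snd c)"

definition is_decorated :: "nat list \<Rightarrow> dmap \<Rightarrow> bool" where
  "is_decorated lam M \<longleftrightarrow>
     (\<forall>x\<in>flags M. dec M x \<in> boxes lam \<and> dec M (a0 M x) = dec M x \<and> dec M (a2 M x) = dec M x) \<and>
     (\<forall>x\<in>flags M. \<forall>y\<in>flags M. dec M x = dec M y \<longrightarrow> y \<in> edge M x) \<and>
     (\<forall>x\<in>flags M. \<forall>y\<in>vertex M x.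
        (if white M x then snd (dec M y) = snd (dec M x) else fst (dec M y) = fst (dec M x)))"

definition rooted_dec :: "dmap \<Rightarrow> bool" where
  "rooted_dec M \<longleftrightarrow> (\<forall>r\<in>root M. \<forall>y\<in>comp M r. lex_le (dec M r) (dec M y))"

definition edges :: "dmap \<Rightarrow> nat set set" where
  "edges M = edge M ` flags M"

text \<open>Rooted lambda-injectively decorated bipartite maps with n edges,
  represented on the flag set {0..<4n}.\<close>
definition IDrep :: "nat \<Rightarrow> nat list \<Rightarrow> dmap set" where
  "IDrep n lam = {M. flags M = {0..<4 * n} \<and> card (edges M) = n \<and> is_map M \<and>
     is_bipartite M \<and> is_rooted M \<and> is_decorated lam M \<and> rooted_dec M}"

definition iso :: "dmap \<Rightarrow> dmap \<Rightarrow> bool" where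
  "iso M N \<longleftrightarrow> (\<exists>\<phi>. bij_betw \<phi> (flags M) (flags N) \<and> (\<forall>x\<in>flags M.
      \<phi> (a0 M x) = a0 N (\<phi> x) \<and> \<phi> (a1 M x) = a1 N (\<phi> x) \<and> \<phi> (a2 M x) = a2 N (\<phi> x) \<and>
      white N (\<phi> x) = white M x \<and> dec N (\<phi> x) = dec M x \<and>
      (\<phi> x \<in> root N \<longleftrightarrow> x \<in> root M)))"

definition ID :: "nat \<Rightarrow> nat list \<Rightarrow> dmap set set" where
  "ID n lam = IDrep n lam // {(M, N). M \<in> IDrep n lam \<and> N \<in> IDrep n lam \<and> iso M N}"

definition nwhite :: "dmap \<Rightarrow> nat" where
  "nwhite M = card {vertex M x | x. x \<in> flags M \<and> white M x}"

definition ncc :: "dmap \<Rightarrow> nat" where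
  "ncc M = card {comp M x | x. x \<in> flags M}"

text \<open>p_type(M) evaluated at p: product over faces of p(half-degree);
  a face of degree d has 2d flags, so its half-degree is (#flags)/4.\<close>
definition ptype :: "(nat \<Rightarrow> int) \<Rightarrow> dmap \<Rightarrow> int" where
  "ptype p M = (\<Prod>f\<in>{face M x | x. x \<in> flags M}. p (card f div 4))"

definition nonorient_stat :: "(dmap \<Rightarrow> nat) \<Rightarrow> bool" where
  "nonorient_stat th \<longleftrightarrow>
     (\<forall>M N. is_map M \<longrightarrow> iso M N \<longrightarrow> th M = th N) \<and>
     (\<forall>M. is_map M \<longrightarrow> (th M = 0 \<longleftrightarrow> orientable M))"

text \<open>F^(alpha)_{lambda,theta}, evaluated at alpha and at the power sums p_k := p k.\<close>
definition Fa :: "int \<Rightarrow> nat list \<Rightarrow> (dmap \<Rightarrow> nat) \<Rightarrow> (nat \<Rightarrow> int) \<Rightarrow> int" where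
  "Fa alpha lam th p = (let n = sum_list lam in
     (\<Sum>C\<in>ID n lam. let M = (SOME M. M \<in> C) in
        (-1) ^ (n - nwhite M) * alpha ^ (nwhite M - ncc M) * (alpha - 1) ^ th M * ptype p M))"

end

theory Submission
  imports Defs "HOL-Combinatorics.Orbits" "HOL-Library.Product_Lexorder"
begin

text \<open>At \<open>\<alpha> = 0\<close> the factor \<open>\<alpha>^(|V(M)| - cc(M))\<close> kills every map having a component with
  two white vertices.  If each component has a single white vertex, two edges at a black
  vertex would carry boxes in the same row and in the same column; so black vertices are
  leaves, every component is a plane star with one face, \<open>M\<close> is orientable and
  \<open>b^\<vartheta>(M) = 1\<close>.  Turning around the white vertices in the direction given by the roots
  reads off a column-preserving permutation \<open>\<sigma>\<close> of the boxes of \<open>\<lambda>\<close>, which determines \<open>M\<close>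
  up to isomorphism, and every such \<open>\<sigma>\<close> arises.  Hence \<open>F\<close> at \<open>\<alpha> = 0\<close> is the sum over these
  \<open>\<sigma>\<close> of \<open>(-1)^(|\<lambda>| - #cycles(\<sigma>))\<close> times the product of \<open>p\<close> over the cycle lengths.  Such a
  \<open>\<sigma>\<close> is a family of permutations of the single columns, and its weight is a product over
  the boxes, hence over the columns.\<close>

section \<open>Orbits of a family of involutions\<close>

definition orb_rel :: "nat set \<Rightarrow> (nat \<Rightarrow> nat) set \<Rightarrow> (nat \<times> nat) set" where
  "orb_rel D fs = {(u, f u) | u f. u \<in> D \<and> f \<in> fs}"

lemma orb_eq_rtrancl: "orb D fs x = {y. (x, y) \<in> (orb_rel D fs)\<^sup>*}"
  unfolding orb_def orb_rel_def by simp

lemma orb_self [simp]: "x \<in> orb D fs x"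
  unfolding orb_eq_rtrancl by simp

lemma orb_step: "y \<in> orb D fs x \<Longrightarrow> y \<in> D \<Longrightarrow> f \<in> fs \<Longrightarrow> f y \<in> orb D fs x"
  unfolding orb_eq_rtrancl orb_rel_def by (auto intro: rtrancl_into_rtrancl)

lemma orb_subset_closed:
  assumes "x \<in> S" "\<And>u f. u \<in> S \<Longrightarrow> u \<in> D \<Longrightarrow> f \<in> fs \<Longrightarrow> f u \<in> S"
  shows "orb D fs x \<subseteq> S"
proof
  fix y assume "y \<in> orb D fs x"
  then have "(x, y) \<in> (orb_rel D fs)\<^sup>*" unfolding orb_eq_rtrancl by simp
  then show "y \<in> S"
    by (induction rule: rtrancl_induct) (use assms in \<open>auto simp: orb_rel_def\<close>)
qed

lemma orb_trans: "y \<in> orb D fs x \<Longrightarrow> z \<in> orb D fs y \<Longrightarrow> z \<in> orb D fs x"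
  unfolding orb_eq_rtrancl by auto

lemma orb_mono: "fs \<subseteq> gs \<Longrightarrow> orb D fs x \<subseteq> orb D gs x"
  by (rule orb_subset_closed) (auto intro: orb_step)

definition involutions_on :: "nat set \<Rightarrow> (nat \<Rightarrow> nat) set \<Rightarrow> bool" where
  "involutions_on D fs \<longleftrightarrow> (\<forall>f\<in>fs. \<forall>u\<in>D. f u \<in> D \<and> f (f u) = u)"

lemma orb_subset: "involutions_on D fs \<Longrightarrow> x \<in> D \<Longrightarrow> orb D fs x \<subseteq> D"
  by (rule orb_subset_closed) (auto simp: involutions_on_def)

lemma orb_sym:
  assumes "involutions_on D fs" "x \<in> D" "y \<in> orb D fs x"
  shows "x \<in> orb D fs y"
proof -
  have "(x, y) \<in> (orb_rel D fs)\<^sup>*" using assms(3) unfolding orb_eq_rtrancl by simp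
  then show ?thesis
  proof (induction rule: rtrancl_induct)
    case (step y z)
    then obtain f where f: "y \<in> D" "f \<in> fs" "z = f y" by (auto simp: orb_rel_def)
    have "z \<in> D" "f z = y" using assms(1) f by (auto simp: involutions_on_def)
    then have "y \<in> orb D fs z" using orb_step[of z D fs z f] f by simp
    then show ?case using step.IH orb_trans by blast
  qed simp
qed

lemma orb_eq:
  assumes "involutions_on D fs" "x \<in> D" "y \<in> orb D fs x"
  shows "orb D fs y = orb D fs x"
  using orb_trans[OF assms(3)] orb_trans[OF orb_sym[OF assms]] by blast

lemma orb_image:
  assumes closed: "\<And>f u. f \<in> fs \<Longrightarrow> u \<in> D \<Longrightarrow> f u \<in> D"
    and maps_to: "\<And>u. u \<in> D \<Longrightarrow> \<phi> u \<in> D'"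
    and fwd: "\<And>f u. f \<in> fs \<Longrightarrow> u \<in> D \<Longrightarrow> \<exists>g\<in>gs. \<phi> (f u) = g (\<phi> u)"
    and bwd: "\<And>g u. g \<in> gs \<Longrightarrow> u \<in> D \<Longrightarrow> \<exists>f\<in>fs. g (\<phi> u) = \<phi> (f u)"
    and x: "x \<in> D"
  shows "\<phi> ` orb D fs x = orb D' gs (\<phi> x)"
proof
  have sub: "orb D fs x \<subseteq> D" by (rule orb_subset_closed) (use x closed in auto)
  have "orb D fs x \<subseteq> {u. \<phi> u \<in> orb D' gs (\<phi> x)}"
  proof (rule orb_subset_closed)
    fix u f assume "u \<in> {u. \<phi> u \<in> orb D' gs (\<phi> x)}" "u \<in> D" "f \<in> fs"
    then show "f u \<in> {u. \<phi> u \<in> orb D' gs (\<phi> x)}"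
      using fwd[of f u] maps_to[of u] orb_step by fastforce
  qed simp
  then show "\<phi> ` orb D fs x \<subseteq> orb D' gs (\<phi> x)" by blast
  show "orb D' gs (\<phi> x) \<subseteq> \<phi> ` orb D fs x"
  proof (rule orb_subset_closed)
    fix v g assume v: "v \<in> \<phi> ` orb D fs x" "g \<in> gs"
    then obtain u where u: "u \<in> orb D fs x" "v = \<phi> u" by auto
    then obtain f where "f \<in> fs" "g (\<phi> u) = \<phi> (f u)" using bwd v(2) sub by blast
    then show "g v \<in> \<phi> ` orb D fs x" using u sub orb_step by auto
  qed (use x in auto)
qed

lemma is_mapD:
  assumes "is_map M" "x \<in> flags M"
  shows "a0 M x \<in> flags M" "a1 M x \<in> flags M" "a2 M x \<in> flags M"
    "a0 M (a0 M x) = x" "a1 M (a1 M x) = x" "a2 M (a2 M x) = x"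
    "a0 M x \<noteq> x" "a1 M x \<noteq> x" "a2 M x \<noteq> x"
    "a0 M (a2 M x) = a2 M (a0 M x)" "a0 M (a2 M x) \<noteq> x"
  using assms unfolding is_map_def by auto

lemma is_map_involutions_on:
  assumes "is_map M" "fs \<subseteq> {a0 M, a1 M, a2 M}"
  shows "involutions_on (flags M) fs"
  using assms is_mapD[OF assms(1)] unfolding involutions_on_def by blast

lemma orbs_subset_flags:
  assumes "is_map M" "x \<in> flags M"
  shows "vertex M x \<subseteq> flags M" "edge M x \<subseteq> flags M" "face M x \<subseteq> flags M" "comp M x \<subseteq> flags M"
  unfolding vertex_def edge_def face_def comp_def
  using orb_subset[OF is_map_involutions_on[OF assms(1)] assms(2)] by auto

lemma vertex_subset_comp: "vertex M x \<subseteq> comp M x"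
  unfolding vertex_def comp_def by (rule orb_mono) auto

lemma face_subset_comp: "face M x \<subseteq> comp M x"
  unfolding face_def comp_def by (rule orb_mono) auto

lemma edge_conv:
  assumes "is_map M" "x \<in> flags M"
  shows "edge M x = {x, a0 M x, a2 M x, a0 M (a2 M x)}"
proof
  note x = is_mapD[OF assms]
  show "edge M x \<subseteq> {x, a0 M x, a2 M x, a0 M (a2 M x)}"
    unfolding edge_def
    by (rule orb_subset_closed) (use x is_mapD[OF assms(1) x(1)] in auto)
  have "a0 M x \<in> edge M x" "a2 M x \<in> edge M x"
    unfolding edge_def using orb_step[of x "flags M" "{a0 M, a2 M}" x] assms by auto
  moreover have "a0 M (a2 M x) \<in> edge M x"
    using orb_step[of "a2 M x" "flags M" "{a0 M, a2 M}" x "a0 M"] x \<open>a2 M x \<in> edge M x\<close>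
    unfolding edge_def by auto
  ultimately show "{x, a0 M x, a2 M x, a0 M (a2 M x)} \<subseteq> edge M x"
    unfolding edge_def by auto
qed

definition iso_by :: "(nat \<Rightarrow> nat) \<Rightarrow> dmap \<Rightarrow> dmap \<Rightarrow> bool" where
  "iso_by \<phi> M N \<longleftrightarrow> bij_betw \<phi> (flags M) (flags N) \<and> (\<forall>x\<in>flags M.
      \<phi> (a0 M x) = a0 N (\<phi> x) \<and> \<phi> (a1 M x) = a1 N (\<phi> x) \<and> \<phi> (a2 M x) = a2 N (\<phi> x) \<and>
      white N (\<phi> x) = white M x \<and> dec N (\<phi> x) = dec M x \<and>
      (\<phi> x \<in> root N \<longleftrightarrow> x \<in> root M))"

lemma iso_iff: "iso M N \<longleftrightarrow> (\<exists>\<phi>. iso_by \<phi> M N)"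
  unfolding iso_def iso_by_def by simp

lemma iso_refl: "iso M M"
  unfolding iso_iff iso_by_def by (rule exI[of _ id]) auto

lemma iso_by_inv_into:
  assumes "iso_by \<phi> M N" "is_map M"
  shows "iso_by (inv_into (flags M) \<phi>) N M"
  unfolding iso_by_def
proof (intro conjI ballI)
  let ?\<psi> = "inv_into (flags M) \<phi>"
  have b: "bij_betw \<phi> (flags M) (flags N)" using assms(1) iso_by_def by blast
  show "bij_betw ?\<psi> (flags N) (flags M)" using bij_betw_inv_into[OF b] .
  fix y assume y: "y \<in> flags N"
  obtain x where x: "x \<in> flags M" "y = \<phi> x" using y bij_betw_imp_surj_on[OF b] by (metis imageE)
  have inv: "\<And>z. z \<in> flags M \<Longrightarrow> ?\<psi> (\<phi> z) = z" using b bij_betw_inv_into_left by fastforce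
  have c: "\<phi> (a0 M x) = a0 N (\<phi> x)" "\<phi> (a1 M x) = a1 N (\<phi> x)" "\<phi> (a2 M x) = a2 N (\<phi> x)"
    "white N (\<phi> x) = white M x" "dec N (\<phi> x) = dec M x" "\<phi> x \<in> root N \<longleftrightarrow> x \<in> root M"
    using assms(1) x(1) unfolding iso_by_def by auto
  note f = is_mapD[OF assms(2) x(1)]
  show "?\<psi> (a0 N y) = a0 M (?\<psi> y)" "?\<psi> (a1 N y) = a1 M (?\<psi> y)" "?\<psi> (a2 N y) = a2 M (?\<psi> y)"
    using c(1-3) inv f(1-3) x by metis+
  show "white M (?\<psi> y) = white N y" "dec M (?\<psi> y) = dec N y" "?\<psi> y \<in> root M \<longleftrightarrow> y \<in> root N"
    using c(4-6) inv x by simp_all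
qed

lemma iso_sym: "is_map M \<Longrightarrow> iso M N \<Longrightarrow> iso N M"
  using iso_by_inv_into iso_iff by blast

lemma iso_by_comp:
  assumes "iso_by \<phi> M N" "iso_by \<psi> N K"
  shows "iso_by (\<psi> \<circ> \<phi>) M K"
proof -
  have b: "bij_betw \<phi> (flags M) (flags N)" "bij_betw \<psi> (flags N) (flags K)"
    using assms iso_by_def by blast+
  have "\<phi> x \<in> flags N" if "x \<in> flags M" for x using bij_betw_apply[OF b(1) that] .
  then show ?thesis using assms bij_betw_trans[OF b] unfolding iso_by_def by auto
qed

lemma iso_trans: "iso M N \<Longrightarrow> iso N K \<Longrightarrow> iso M K"
  unfolding iso_iff by (metis iso_by_comp)

text \<open>The index set \<open>S \<subseteq> {0,1,2}\<close> selects the involutions generating the orbit, so that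
  one lemma covers vertices, faces and components alike.\<close>

lemma iso_by_orb:
  assumes "iso_by \<phi> M N" "is_map M" "x \<in> flags M" "S \<subseteq> {0, 1, 2}"
    and fs: "fs = (\<lambda>i. if i = 0 then a0 M else if i = 1 then a1 M else a2 M) ` S"
    and gs: "gs = (\<lambda>i. if i = 0 then a0 N else if i = 1 then a1 N else a2 N) ` S"
  shows "\<phi> ` orb (flags M) fs x = orb (flags N) gs (\<phi> x)"
proof (rule orb_image)
  have comm: "\<phi> ((if i = 0 then a0 M else if i = 1 then a1 M else a2 M) u)
      = (if i = 0 then a0 N else if i = 1 then a1 N else a2 N) (\<phi> u)" if "u \<in> flags M" for i u
    using assms(1) that unfolding iso_by_def by auto
  show "\<exists>g\<in>gs. \<phi> (f u) = g (\<phi> u)" if "f \<in> fs" "u \<in> flags M" for f u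
    using that comm unfolding fs gs by blast
  show "\<exists>f\<in>fs. g (\<phi> u) = \<phi> (f u)" if "g \<in> gs" "u \<in> flags M" for g u
    using that comm unfolding fs gs by (metis (no_types, lifting) image_iff)
  have "fs \<subseteq> {a0 M, a1 M, a2 M}" using assms(4) unfolding fs by auto
  then show "\<And>f u. f \<in> fs \<Longrightarrow> u \<in> flags M \<Longrightarrow> f u \<in> flags M"
    using is_map_involutions_on[OF assms(2)] unfolding involutions_on_def by blast
  show "\<And>u. u \<in> flags M \<Longrightarrow> \<phi> u \<in> flags N"
    using assms(1) unfolding iso_by_def by (metis bij_betw_apply)
qed (rule assms(3))

lemma iso_by_vertex: "iso_by \<phi> M N \<Longrightarrow> is_map M \<Longrightarrow> x \<in> flags M \<Longrightarrow> \<phi> ` vertex M x = vertex N (\<phi> x)"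
  unfolding vertex_def by (rule iso_by_orb[where S="{1,2}"]) auto

lemma iso_by_face: "iso_by \<phi> M N \<Longrightarrow> is_map M \<Longrightarrow> x \<in> flags M \<Longrightarrow> \<phi> ` face M x = face N (\<phi> x)"
  unfolding face_def by (rule iso_by_orb[where S="{0,1}"]) auto

lemma iso_by_comp_image: "iso_by \<phi> M N \<Longrightarrow> is_map M \<Longrightarrow> x \<in> flags M \<Longrightarrow> \<phi> ` comp M x = comp N (\<phi> x)"
  unfolding comp_def by (rule iso_by_orb[where S="{0,1,2}"]) auto

lemma iso_by_orbit_sets:
  assumes "iso_by \<phi> M N"
    and "\<And>x. x \<in> flags M \<Longrightarrow> \<phi> ` Orb M x = Orb N (\<phi> x)"
    and "\<And>x. x \<in> flags M \<Longrightarrow> P N (\<phi> x) = P M x"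
  shows "{Orb N y | y. y \<in> flags N \<and> P N y} = (\<lambda>A. \<phi> ` A) ` {Orb M x | x. x \<in> flags M \<and> P M x}"
proof (intro set_eqI iffI)
  have surj: "flags N = \<phi> ` flags M" using assms(1) bij_betw_imp_surj_on unfolding iso_by_def by blast
  fix A
  show "A \<in> (\<lambda>A. \<phi> ` A) ` {Orb M x | x. x \<in> flags M \<and> P M x}"
    if A: "A \<in> {Orb N y | y. y \<in> flags N \<and> P N y}"
  proof -
    obtain y where y: "y \<in> flags N" "P N y" "A = Orb N y" using A by blast
    then obtain x where "x \<in> flags M" "y = \<phi> x" using surj by blast
    then show ?thesis using y assms(2,3) by auto
  qed
  show "A \<in> {Orb N y | y. y \<in> flags N \<and> P N y}"
    if A: "A \<in> (\<lambda>A. \<phi> ` A) ` {Orb M x | x. x \<in> flags M \<and> P M x}"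
  proof -
    obtain x where "x \<in> flags M" "P M x" "A = \<phi> ` Orb M x" using A by auto
    then show ?thesis using assms(2,3) surj by fastforce
  qed
qed

lemma card_iso_by_orbit_sets:
  assumes "iso_by \<phi> M N"
    and "\<And>x. x \<in> flags M \<Longrightarrow> \<phi> ` Orb M x = Orb N (\<phi> x)"
    and "\<And>x. x \<in> flags M \<Longrightarrow> Orb M x \<subseteq> flags M"
    and "\<And>x. x \<in> flags M \<Longrightarrow> P N (\<phi> x) = P M x"
  shows "card {Orb N y | y. y \<in> flags N \<and> P N y} = card {Orb M x | x. x \<in> flags M \<and> P M x}"
proof -
  have "inj_on \<phi> (flags M)" using assms(1) unfolding iso_by_def bij_betw_def by blast
  then have "inj_on (\<lambda>A. \<phi> ` A) {Orb M x | x. x \<in> flags M \<and> P M x}"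
    using assms(3) by (smt (verit, best) inj_onI inj_on_image_eq_iff mem_Collect_eq)
  moreover have "{Orb N y | y. y \<in> flags N \<and> P N y} = (\<lambda>A. \<phi> ` A) ` {Orb M x | x. x \<in> flags M \<and> P M x}"
    by (rule iso_by_orbit_sets) (use assms in auto)
  ultimately show ?thesis by (simp add: card_image)
qed

lemma nwhite_iso_by: assumes "iso_by \<phi> M N" "is_map M" shows "nwhite N = nwhite M"
  unfolding nwhite_def
proof (rule card_iso_by_orbit_sets[where Orb=vertex and P=white, OF assms(1)])
  show "\<And>x. x \<in> flags M \<Longrightarrow> \<phi> ` vertex M x = vertex N (\<phi> x)" using iso_by_vertex[OF assms] .
  show "\<And>x. x \<in> flags M \<Longrightarrow> vertex M x \<subseteq> flags M" using orbs_subset_flags[OF assms(2)] by blast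
  show "\<And>x. x \<in> flags M \<Longrightarrow> white N (\<phi> x) = white M x" using assms(1) unfolding iso_by_def by blast
qed

lemma ncc_iso_by: assumes "iso_by \<phi> M N" "is_map M" shows "ncc N = ncc M"
  using card_iso_by_orbit_sets[where Orb=comp and P="\<lambda>_ _. True", OF assms(1)]
    iso_by_comp_image[OF assms] orbs_subset_flags[OF assms(2)]
  unfolding ncc_def by simp

lemma ptype_iso_by: assumes "iso_by \<phi> M N" "is_map M" shows "ptype p N = ptype p M"
proof -
  let ?faces = "\<lambda>M. {face M x | x. x \<in> flags M}"
  have inj: "inj_on \<phi> (flags M)" using assms(1) unfolding iso_by_def bij_betw_def by blast
  have faces: "?faces N = (\<lambda>A. \<phi> ` A) ` ?faces M"
    using iso_by_orbit_sets[where Orb=face and P="\<lambda>_ _. True", OF assms(1)] iso_by_face[OF assms]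
    by simp
  have sub: "A \<subseteq> flags M" if "A \<in> ?faces M" for A
    using that orbs_subset_flags(3)[OF assms(2)] by blast
  have "inj_on (\<lambda>A. \<phi> ` A) (?faces M)"
    using inj sub by (smt (verit, best) inj_onI inj_on_image_eq_iff)
  moreover have "card (\<phi> ` A) = card A" if "A \<in> ?faces M" for A
    using card_image inj_on_subset[OF inj sub[OF that]] by blast
  ultimately show ?thesis
    unfolding ptype_def faces by (simp add: prod.reindex)
qed

section \<open>Boxes and the star map of a permutation\<close>

lemma boxes_Sigma: "boxes lam = Sigma {1..length lam} (\<lambda>i. {1..lam ! (i - 1)})"
  unfolding boxes_def by auto

lemma finite_boxes: "finite (boxes lam)"
  unfolding boxes_Sigma by auto

lemma card_boxes: "card (boxes lam) = sum_list lam"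
proof -
  have "card (boxes lam) = (\<Sum>i\<in>{1..length lam}. lam ! (i - 1))"
    unfolding boxes_Sigma by (subst card_SigmaI) auto
  also have "\<dots> = (\<Sum>i\<in>Suc ` {0..<length lam}. lam ! (i - 1))"
    by (rule sum.cong) (auto simp: image_iff intro: bexI[of _ "i - 1" for i])
  also have "\<dots> = (\<Sum>i = 0..<length lam. lam ! i)" by (subst sum.reindex) auto
  also have "\<dots> = sum_list lam" by (simp add: sum_list_sum_nth)
  finally show ?thesis .
qed

definition box_index :: "nat list \<Rightarrow> nat \<times> nat \<Rightarrow> nat" where
  "box_index lam = (SOME f. bij_betw f (boxes lam) {0..<card (boxes lam)})"

lemma bij_betw_box_index: "bij_betw (box_index lam) (boxes lam) {0..<card (boxes lam)}"
  unfolding box_index_def using ex_bij_betw_finite_nat[OF finite_boxes] by (rule someI_ex)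

lemma lex_le_iff: "lex_le b c \<longleftrightarrow> b \<le> c"
  unfolding lex_le_def by (cases b; cases c) auto

lemma perm_orbit_facts:
  assumes "\<sigma> permutes B" "finite B" "b \<in> B"
  shows "b \<in> orbit \<sigma> b" "orbit \<sigma> b \<subseteq> B" "\<sigma> b \<in> orbit \<sigma> b" "inv \<sigma> b \<in> orbit \<sigma> b"
    "finite (orbit \<sigma> b)"
    "\<And>c. c \<in> orbit \<sigma> b \<Longrightarrow> orbit \<sigma> c = orbit \<sigma> b"
proof -
  have p: "permutation \<sigma>" using assms permutation_permutes by blast
  show "b \<in> orbit \<sigma> b" using permutation_self_in_orbit[OF p] .
  show "orbit \<sigma> b \<subseteq> B" using permutes_orbit_subset[OF assms(1,3)] .
  then show "finite (orbit \<sigma> b)" using assms(2) finite_subset by blast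
  show "\<sigma> b \<in> orbit \<sigma> b" by (rule orbit.base)
  have "inv \<sigma> b \<in> orbit (inv \<sigma>) b" by (rule orbit.base)
  then show "inv \<sigma> b \<in> orbit \<sigma> b" using orbit_inv_eq[OF p] by simp
  show "\<And>c. c \<in> orbit \<sigma> b \<Longrightarrow> orbit \<sigma> c = orbit \<sigma> b"
    using cyclic_on_orbit[OF assms(1,2)] orbit_cyclic_eq3 by metis
qed

locale star_construction =
  fixes B :: "(nat \<times> nat) set" and idx :: "nat \<times> nat \<Rightarrow> nat" and \<sigma> :: "nat \<times> nat \<Rightarrow> nat \<times> nat"
  assumes finB: "finite B" and bij: "bij_betw idx B {0..<card B}" and perm: "\<sigma> permutes B"
begin

definition idx_box :: "nat \<Rightarrow> nat \<times> nat" where "idx_box q = inv_into B idx q"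
definition flag :: "nat \<times> nat \<Rightarrow> nat \<Rightarrow> nat" where "flag b t = 4 * idx b + t"

text \<open>The star map of \<open>\<sigma>\<close>: box \<open>b\<close> becomes the edge with flags \<open>flag b t = 4 idx(b) + t\<close>,
  \<open>t < 4\<close>, where flags 0 and 1 lie at a white vertex and flags 2 and 3 at a black leaf.
  Since \<open>a1\<close> joins flag 0 of \<open>b\<close> to flag 1 of \<open>\<sigma> b\<close>, turning around a white vertex runs
  through a cycle of \<open>\<sigma>\<close>; each cycle thus yields a plane star with a single face, rooted at
  its smallest box.\<close>

definition Star :: dmap where
  "Star = \<lparr> flags = {0..<4 * card B},
     a0 = (\<lambda>x. if x mod 4 < 2 then x + 2 else x - 2),
     a1 = (\<lambda>x. if x mod 4 = 0 then flag (\<sigma> (idx_box (x div 4))) 1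
              else if x mod 4 = 1 then flag (inv \<sigma> (idx_box (x div 4))) 0
              else if even x then x + 1 else x - 1),
     a2 = (\<lambda>x. if even x then x + 1 else x - 1),
     white = (\<lambda>x. x mod 4 < 2),
     root = {flag b 0 | b. b \<in> B \<and> b = Min (orbit \<sigma> b)},
     dec = (\<lambda>x. idx_box (x div 4)) \<rparr>"

lemma idx_lt: "b \<in> B \<Longrightarrow> idx b < card B"
  using bij bij_betw_apply by fastforce

lemma idx_box_idx[simp]: "b \<in> B \<Longrightarrow> idx_box (idx b) = b"
  unfolding idx_box_def using bij bij_betw_inv_into_left by fastforce

lemma idx_inj: "b \<in> B \<Longrightarrow> c \<in> B \<Longrightarrow> idx b = idx c \<longleftrightarrow> b = c"
  using bij unfolding bij_betw_def inj_on_def by blast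

lemma flag_div[simp]: "t < 4 \<Longrightarrow> flag b t div 4 = idx b" unfolding flag_def by simp
lemma flag_mod[simp]: "t < 4 \<Longrightarrow> flag b t mod 4 = t" unfolding flag_def by simp

lemma less_4_cases: "t < (4::nat) \<Longrightarrow> t = 0 \<or> t = 1 \<or> t = 2 \<or> t = 3" by auto

lemma flag_eq_iff: "b \<in> B \<Longrightarrow> c \<in> B \<Longrightarrow> t < 4 \<Longrightarrow> t' < 4 \<Longrightarrow> flag b t = flag c t' \<longleftrightarrow> b = c \<and> t = t'"
proof
  assume a: "b \<in> B" "c \<in> B" "t < 4" "t' < 4" "flag b t = flag c t'"
  then have "idx b = idx c" "t = t'" using flag_div flag_mod by metis+
  then show "b = c \<and> t = t'" using idx_inj a by blast
qed auto

lemma flag_in_Star: "b \<in> B \<Longrightarrow> t < 4 \<Longrightarrow> flag b t \<in> flags Star"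
  unfolding Star_def flag_def using idx_lt[of b] by simp

lemma Star_flag_cases:
  assumes "x \<in> flags Star"
  obtains b t where "b \<in> B" "t < 4" "x = flag b t"
proof -
  have x: "x < 4 * card B" using assms unfolding Star_def by simp
  have q: "x div 4 \<in> {0..<card B}" using x by auto
  let ?b = "idx_box (x div 4)"
  have "?b \<in> B" unfolding idx_box_def using q bij by (metis bij_betw_def inv_into_into)
  moreover have "idx ?b = x div 4" unfolding idx_box_def using q bij
    by (meson bij_betw_inv_into_right)
  ultimately show ?thesis using that[of ?b "x mod 4"] unfolding flag_def by simp
qed

lemma sigma_in_B: "b \<in> B \<Longrightarrow> \<sigma> b \<in> B" using perm by (simp add: permutes_in_image)
lemma inv_sigma_in_B: "b \<in> B \<Longrightarrow> inv \<sigma> b \<in> B"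
  using permutes_in_image[OF permutes_inv[OF perm]] by simp

lemma flag_even: "even (flag b t) \<longleftrightarrow> even t" unfolding flag_def by simp

lemma Star_simps:
  assumes "b \<in> B"
  shows "a0 Star (flag b 0) = flag b 2" "a0 Star (flag b 1) = flag b 3" "a0 Star (flag b 2) = flag b 0" "a0 Star (flag b 3) = flag b 1"
    "a1 Star (flag b 0) = flag (\<sigma> b) 1" "a1 Star (flag b 1) = flag (inv \<sigma> b) 0" "a1 Star (flag b 2) = flag b 3" "a1 Star (flag b 3) = flag b 2"
    "a2 Star (flag b 0) = flag b 1" "a2 Star (flag b 1) = flag b 0" "a2 Star (flag b 2) = flag b 3" "a2 Star (flag b 3) = flag b 2"
    "t < 4 \<Longrightarrow> white Star (flag b t) \<longleftrightarrow> t < 2"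
    "t < 4 \<Longrightarrow> dec Star (flag b t) = b"
  using assms by (simp_all add: Star_def flag_even) (simp_all add: flag_def)

lemma Star_flags: "flags Star = {0..<4 * card B}" unfolding Star_def by simp
lemma Star_root: "root Star = {flag b 0 | b. b \<in> B \<and> b = Min (orbit \<sigma> b)}" unfolding Star_def by simp

lemma is_map_Star: "is_map Star"
  unfolding is_map_def
proof (intro conjI)
  show "finite (flags Star)" unfolding Star_def by simp
  show "\<forall>x\<in>flags Star. \<forall>f\<in>{a0 Star, a1 Star, a2 Star}. f x \<in> flags Star \<and> f (f x) = x \<and> f x \<noteq> x"
  proof (intro ballI)
    fix x f assume x: "x \<in> flags Star" and f: "f \<in> {a0 Star, a1 Star, a2 Star}"
    obtain b t where bt: "b \<in> B" "t < 4" "x = flag b t" using Star_flag_cases[OF x] by blast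
    have t: "t = 0 \<or> t = 1 \<or> t = 2 \<or> t = 3" using less_4_cases bt by blast
    have sb: "\<sigma> b \<in> B" "inv \<sigma> b \<in> B" using sigma_in_B inv_sigma_in_B bt by auto
    have si: "inv \<sigma> (\<sigma> b) = b" "\<sigma> (inv \<sigma> b) = b" using perm
      by (simp_all add: permutes_inverses)
    have r: "\<And>c t. c \<in> B \<Longrightarrow> t < 4 \<Longrightarrow> flag c t \<in> flags Star" using flag_in_Star by blast
    have ne: "\<And>c t t'. c \<in> B \<Longrightarrow> t < 4 \<Longrightarrow> t' < 4 \<Longrightarrow> t \<noteq> t' \<Longrightarrow> flag c t \<noteq> flag b t'"
      using flag_eq_iff bt(1) by blast
    show "f x \<in> flags Star \<and> f (f x) = x \<and> f x \<noteq> x"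
      using f t bt sb Star_simps[OF bt(1)] Star_simps[OF sb(1)] Star_simps[OF sb(2)] si
        r[OF bt(1)] r[OF sb(1)] r[OF sb(2)] ne[OF bt(1)] ne[OF sb(1)] ne[OF sb(2)]
      by (elim disjE insertE) auto
  qed
  show "\<forall>x\<in>flags Star. a0 Star (a2 Star x) = a2 Star (a0 Star x) \<and> a0 Star (a2 Star x) \<noteq> x"
  proof (intro ballI)
    fix x assume x: "x \<in> flags Star"
    obtain b t where bt: "b \<in> B" "t < 4" "x = flag b t" using Star_flag_cases[OF x] by blast
    have t: "t = 0 \<or> t = 1 \<or> t = 2 \<or> t = 3" using less_4_cases bt by blast
    have ne: "\<And>t t'. t < 4 \<Longrightarrow> t' < 4 \<Longrightarrow> t \<noteq> t' \<Longrightarrow> flag b t \<noteq> flag b t'"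
      using flag_eq_iff bt(1) by blast
    show "a0 Star (a2 Star x) = a2 Star (a0 Star x) \<and> a0 Star (a2 Star x) \<noteq> x"
      using t bt Star_simps[OF bt(1)] ne by (elim disjE) auto
  qed
qed

lemma is_bipartite_Star: "is_bipartite Star"
  unfolding is_bipartite_def
proof (intro ballI)
  fix x assume x: "x \<in> flags Star"
  obtain b t where bt: "b \<in> B" "t < 4" "x = flag b t" using Star_flag_cases[OF x] by blast
  have t: "t = 0 \<or> t = 1 \<or> t = 2 \<or> t = 3" using less_4_cases bt by blast
  show "white Star (a1 Star x) = white Star x \<and> white Star (a2 Star x) = white Star x \<and> white Star (a0 Star x) \<noteq> white Star x"
    using t bt Star_simps[OF bt(1)] Star_simps[OF sigma_in_B[OF bt(1)]] Star_simps[OF inv_sigma_in_B[OF bt(1)]]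
    by (elim disjE) auto
qed

lemma orientable_Star: "orientable Star"
  unfolding orientable_def
proof (intro exI ballI)
  fix x assume x: "x \<in> flags Star"
  obtain b t where bt: "b \<in> B" "t < 4" "x = flag b t" using Star_flag_cases[OF x] by blast
  have t: "t = 0 \<or> t = 1 \<or> t = 2 \<or> t = 3" using less_4_cases bt by blast
  let ?s = "\<lambda>x. x mod 4 = 0 \<or> x mod 4 = 3"
  show "?s (a0 Star x) \<noteq> ?s x \<and> ?s (a1 Star x) \<noteq> ?s x \<and> ?s (a2 Star x) \<noteq> ?s x"
    using t bt Star_simps[OF bt(1)] by (elim disjE) auto
qed

definition star_flags :: "nat \<times> nat \<Rightarrow> nat set" where
  "star_flags b = {flag c t | c t. c \<in> orbit \<sigma> b \<and> t < 4}"
definition star_white_flags :: "nat \<times> nat \<Rightarrow> nat set" where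
  "star_white_flags b = {flag c t | c t. c \<in> orbit \<sigma> b \<and> t < 2}"

lemma sigma_orbit: "b \<in> B \<Longrightarrow> b \<in> orbit \<sigma> b" "b \<in> B \<Longrightarrow> orbit \<sigma> b \<subseteq> B"
  "b \<in> B \<Longrightarrow> \<sigma> b \<in> orbit \<sigma> b" "b \<in> B \<Longrightarrow> inv \<sigma> b \<in> orbit \<sigma> b"
  "b \<in> B \<Longrightarrow> finite (orbit \<sigma> b)"
  "b \<in> B \<Longrightarrow> c \<in> orbit \<sigma> b \<Longrightarrow> orbit \<sigma> c = orbit \<sigma> b"
  using perm_orbit_facts[OF perm finB] by blast+

lemma sigma_orbit_closed:
  assumes "b \<in> B" "c \<in> orbit \<sigma> b"
  shows "\<sigma> c \<in> orbit \<sigma> b" "inv \<sigma> c \<in> orbit \<sigma> b" "c \<in> B"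
proof -
  show "c \<in> B" using sigma_orbit(2)[OF assms(1)] assms(2) by blast
  then show "\<sigma> c \<in> orbit \<sigma> b" "inv \<sigma> c \<in> orbit \<sigma> b"
    using sigma_orbit(3,4,6)[OF \<open>c \<in> B\<close>] sigma_orbit(6)[OF assms] by auto
qed

lemma face_Star_step:
  assumes "c \<in> B" "flag c 0 \<in> face Star x"
  shows "flag c 1 \<in> face Star x" "flag c 2 \<in> face Star x" "flag c 3 \<in> face Star x" "flag (\<sigma> c) 0 \<in> face Star x"
proof -
  note st = orb_step[where D="flags Star" and fs="{a0 Star, a1 Star}", folded face_def]
  have sc: "\<sigma> c \<in> B" using sigma_in_B assms by blast
  note cs = Star_simps[OF assms(1)] Star_simps[OF sc]
  have 2: "flag c 2 \<in> face Star x" using st[OF assms(2) flag_in_Star[OF assms(1)], of "a0 Star"] cs by simp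
  have 3: "flag c 3 \<in> face Star x" using st[OF 2 flag_in_Star[OF assms(1)], of "a1 Star"] cs by simp
  have 1: "flag c 1 \<in> face Star x" using st[OF 3 flag_in_Star[OF assms(1)], of "a0 Star"] cs by simp
  have s1: "flag (\<sigma> c) 1 \<in> face Star x" using st[OF assms(2) flag_in_Star[OF assms(1)], of "a1 Star"] cs by simp
  have s3: "flag (\<sigma> c) 3 \<in> face Star x" using st[OF s1 flag_in_Star[OF sc], of "a0 Star"] cs by simp
  have s2: "flag (\<sigma> c) 2 \<in> face Star x" using st[OF s3 flag_in_Star[OF sc], of "a1 Star"] cs by simp
  have s0: "flag (\<sigma> c) 0 \<in> face Star x" using st[OF s2 flag_in_Star[OF sc], of "a0 Star"] cs by simp
  show "flag c 1 \<in> face Star x" "flag c 2 \<in> face Star x" "flag c 3 \<in> face Star x" "flag (\<sigma> c) 0 \<in> face Star x"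
    using 1 2 3 s0 by auto
qed

lemma face_Star_reach:
  assumes "b \<in> B" "c \<in> orbit \<sigma> b"
  shows "flag c 0 \<in> face Star (flag b 0)"
  using assms(2)
proof induction
  case base
  show ?case using face_Star_step(4)[OF assms(1)] face_def by simp
next
  case (step y)
  have "y \<in> B" using sigma_orbit_closed[OF assms(1) step(1)] by blast
  then show ?case using face_Star_step(4)[OF _ step(2)] by blast
qed

lemma star_flags_subset_face: assumes "b \<in> B" shows "star_flags b \<subseteq> face Star (flag b 0)"
proof
  fix x assume "x \<in> star_flags b"
  then obtain c t where ct: "c \<in> orbit \<sigma> b" "t < 4" "x = flag c t" unfolding star_flags_def by blast
  have c: "c \<in> B" using sigma_orbit_closed[OF assms ct(1)] by blast
  have "flag c 0 \<in> face Star (flag b 0)" using face_Star_reach[OF assms ct(1)] .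
  then have "flag c 0 \<in> face Star (flag b 0) \<and> flag c 1 \<in> face Star (flag b 0) \<and> flag c 2 \<in> face Star (flag b 0) \<and> flag c 3 \<in> face Star (flag b 0)"
    using face_Star_step[OF c] by blast
  then show "x \<in> face Star (flag b 0)" using less_4_cases[OF ct(2)] ct(3) by auto
qed

lemma comp_subset_star_flags: assumes "b \<in> B" "t < 4" shows "comp Star (flag b t) \<subseteq> star_flags b"
  unfolding comp_def
proof (rule orb_subset_closed)
  show "flag b t \<in> star_flags b" unfolding star_flags_def using assms sigma_orbit(1)[OF assms(1)] by blast
next
  fix u f assume u: "u \<in> star_flags b" "u \<in> flags Star" "f \<in> {a0 Star, a1 Star, a2 Star}"
  then obtain c t where ct: "c \<in> orbit \<sigma> b" "t < 4" "u = flag c t" unfolding star_flags_def by blast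
  note oc = sigma_orbit_closed[OF assms(1) ct(1)]
  have m: "\<And>d t. d \<in> orbit \<sigma> b \<Longrightarrow> t < 4 \<Longrightarrow> flag d t \<in> star_flags b" unfolding star_flags_def by blast
  show "f u \<in> star_flags b"
    using u(3) less_4_cases[OF ct(2)] ct Star_simps[OF oc(3)] m[OF ct(1)] m[OF oc(1)] m[OF oc(2)]
    by (elim disjE insertE) auto
qed

lemma involutions_on_Star: "fs \<subseteq> {a0 Star, a1 Star, a2 Star} \<Longrightarrow> involutions_on (flags Star) fs"
  using is_map_involutions_on[OF is_map_Star] .

lemma comp_Star: assumes "b \<in> B" "t < 4" shows "face Star (flag b t) = star_flags b" "comp Star (flag b t) = star_flags b"
proof -
  have "flag b t \<in> star_flags b" unfolding star_flags_def using assms sigma_orbit(1)[OF assms(1)] by blast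
  then have "flag b t \<in> face Star (flag b 0)" using star_flags_subset_face[OF assms(1)] by blast
  moreover have inv: "involutions_on (flags Star) {a0 Star, a1 Star}" by (rule involutions_on_Star) auto
  moreover have F0: "flag b 0 \<in> flags Star" by (rule flag_in_Star) (use assms in auto)
  ultimately have e: "face Star (flag b t) = face Star (flag b 0)"
    unfolding face_def using orb_eq by blast
  show "face Star (flag b t) = star_flags b"
    using e star_flags_subset_face[OF assms(1)] comp_subset_star_flags[OF assms] face_subset_comp by blast
  then show "comp Star (flag b t) = star_flags b"
    using comp_subset_star_flags[OF assms] face_subset_comp by blast
qed

lemma vertex_Star_step:
  assumes "c \<in> B" "flag c 0 \<in> vertex Star x"
  shows "flag c 1 \<in> vertex Star x" "flag (\<sigma> c) 0 \<in> vertex Star x"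
proof -
  note st = orb_step[where D="flags Star" and fs="{a1 Star, a2 Star}", folded vertex_def]
  have sc: "\<sigma> c \<in> B" using sigma_in_B assms by blast
  note cs = Star_simps[OF assms(1)] Star_simps[OF sc]
  show "flag c 1 \<in> vertex Star x" using st[OF assms(2) flag_in_Star[OF assms(1)], of "a2 Star"] cs by simp
  have s1: "flag (\<sigma> c) 1 \<in> vertex Star x" using st[OF assms(2) flag_in_Star[OF assms(1)], of "a1 Star"] cs by simp
  show "flag (\<sigma> c) 0 \<in> vertex Star x" using st[OF s1 flag_in_Star[OF sc], of "a2 Star"] cs by simp
qed

lemma vertex_Star_reach:
  assumes "b \<in> B" "c \<in> orbit \<sigma> b"
  shows "flag c 0 \<in> vertex Star (flag b 0)"
  using assms(2)
proof induction
  case base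
  show ?case using vertex_Star_step(2)[OF assms(1)] vertex_def by simp
next
  case (step y)
  have "y \<in> B" using sigma_orbit_closed[OF assms(1) step(1)] by blast
  then show ?case using vertex_Star_step(2)[OF _ step(2)] by blast
qed

lemma vertex_Star_white: assumes "b \<in> B" "t < 2" shows "vertex Star (flag b t) = star_white_flags b"
proof -
  have sub1: "star_white_flags b \<subseteq> vertex Star (flag b 0)"
  proof
    fix x assume "x \<in> star_white_flags b"
    then obtain c t where ct: "c \<in> orbit \<sigma> b" "t < 2" "x = flag c t" unfolding star_white_flags_def by blast
    have c: "c \<in> B" using sigma_orbit_closed[OF assms(1) ct(1)] by blast
    have "flag c 0 \<in> vertex Star (flag b 0)" using vertex_Star_reach[OF assms(1) ct(1)] .
    then show "x \<in> vertex Star (flag b 0)" using vertex_Star_step[OF c] ct by (cases t) auto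
  qed
  have sub2: "vertex Star (flag b t) \<subseteq> star_white_flags b"
    unfolding vertex_def
  proof (rule orb_subset_closed)
    show "flag b t \<in> star_white_flags b" unfolding star_white_flags_def using assms sigma_orbit(1)[OF assms(1)] by blast
  next
    fix u f assume u: "u \<in> star_white_flags b" "u \<in> flags Star" "f \<in> {a1 Star, a2 Star}"
    then obtain c t where ct: "c \<in> orbit \<sigma> b" "t < 2" "u = flag c t" unfolding star_white_flags_def by blast
    note oc = sigma_orbit_closed[OF assms(1) ct(1)]
    have m: "\<And>d t. d \<in> orbit \<sigma> b \<Longrightarrow> t < 2 \<Longrightarrow> flag d t \<in> star_white_flags b" unfolding star_white_flags_def by blast
    have t: "t = 0 \<or> t = 1" using ct by auto
    show "f u \<in> star_white_flags b"
      using u(3) t ct Star_simps[OF oc(3)] m[OF ct(1)] m[OF oc(1)] m[OF oc(2)]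
      by (elim disjE insertE) auto
  qed
  have "flag b t \<in> star_white_flags b" unfolding star_white_flags_def using assms sigma_orbit(1)[OF assms(1)] by blast
  then have "flag b t \<in> vertex Star (flag b 0)" using sub1 by blast
  moreover have inv: "involutions_on (flags Star) {a1 Star, a2 Star}" by (rule involutions_on_Star) auto
  moreover have F0: "flag b 0 \<in> flags Star" by (rule flag_in_Star) (use assms in auto)
  ultimately have e: "vertex Star (flag b t) = vertex Star (flag b 0)"
    unfolding vertex_def using orb_eq by blast
  show ?thesis using e sub1 sub2 by blast
qed

lemma vertex_Star_black: assumes "b \<in> B" "t = 2 \<or> t = 3" shows "vertex Star (flag b t) \<subseteq> {flag b 2, flag b 3}"
  unfolding vertex_def
proof (rule orb_subset_closed)
  show "flag b t \<in> {flag b 2, flag b 3}" using assms by auto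
next
  fix u f assume u: "u \<in> {flag b 2, flag b 3}" "u \<in> flags Star" "f \<in> {a1 Star, a2 Star}"
  then show "f u \<in> {flag b 2, flag b 3}" using Star_simps[OF assms(1)] by auto
qed

definition cycle_min :: "nat \<times> nat \<Rightarrow> nat \<times> nat" where "cycle_min b = Min (orbit \<sigma> b)"
definition cycle_mins :: "(nat \<times> nat) set" where "cycle_mins = {b \<in> B. b = cycle_min b}"

lemma cycle_min_facts:
  assumes "b \<in> B"
  shows "cycle_min b \<in> orbit \<sigma> b" "cycle_min b \<in> B" "orbit \<sigma> (cycle_min b) = orbit \<sigma> b" "cycle_min (cycle_min b) = cycle_min b"
    "\<And>c. c \<in> orbit \<sigma> b \<Longrightarrow> cycle_min b \<le> c" "cycle_min b \<in> cycle_mins"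
proof -
  have f: "finite (orbit \<sigma> b)" "orbit \<sigma> b \<noteq> {}" using sigma_orbit(1,5)[OF assms] by auto
  show m: "cycle_min b \<in> orbit \<sigma> b" unfolding cycle_min_def using Min_in[OF f] .
  show mB: "cycle_min b \<in> B" using m sigma_orbit_closed[OF assms] by blast
  show o: "orbit \<sigma> (cycle_min b) = orbit \<sigma> b" using sigma_orbit(6)[OF assms m] .
  have "cycle_min (cycle_min b) = Min (orbit \<sigma> (cycle_min b))" by (simp add: cycle_min_def)
  also have "\<dots> = cycle_min b" using o by (simp add: cycle_min_def)
  finally show mm: "cycle_min (cycle_min b) = cycle_min b" .
  show "\<And>c. c \<in> orbit \<sigma> b \<Longrightarrow> cycle_min b \<le> c" unfolding cycle_min_def using f by simp
  show "cycle_min b \<in> cycle_mins" unfolding cycle_mins_def using mB mm by simp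
qed

lemma cycle_min_eq: "b \<in> B \<Longrightarrow> c \<in> orbit \<sigma> b \<Longrightarrow> cycle_min c = cycle_min b"
  unfolding cycle_min_def using sigma_orbit(6) by simp

lemma star_flags_mem: "c \<in> orbit \<sigma> b \<Longrightarrow> t < 4 \<Longrightarrow> flag c t \<in> star_flags b"
  unfolding star_flags_def by blast
lemma star_white_flags_mem: "c \<in> orbit \<sigma> b \<Longrightarrow> t < 2 \<Longrightarrow> flag c t \<in> star_white_flags b"
  unfolding star_white_flags_def by blast
lemma flag_in_root: "c \<in> B \<Longrightarrow> c = cycle_min c \<Longrightarrow> flag c 0 \<in> root Star"
  unfolding Star_root cycle_min_def by blast

lemma cycle_mins_subset: "cycle_mins \<subseteq> B" unfolding cycle_mins_def by auto

lemma flag_in_star_flags: "flag c t \<in> star_flags b \<Longrightarrow> b \<in> B \<Longrightarrow> t < 4 \<Longrightarrow> c \<in> B \<Longrightarrow> c \<in> orbit \<sigma> b"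
proof -
  assume a: "flag c t \<in> star_flags b" "b \<in> B" "t < 4" "c \<in> B"
  then obtain d t' where "d \<in> orbit \<sigma> b" "t' < 4" "flag c t = flag d t'" unfolding star_flags_def by blast
  then show ?thesis using flag_eq_iff[of c d t t'] a sigma_orbit_closed[OF a(2)] by auto
qed

lemma flag_in_star_white_flags: "flag c t \<in> star_white_flags b \<Longrightarrow> b \<in> B \<Longrightarrow> t < 4 \<Longrightarrow> c \<in> B \<Longrightarrow> c \<in> orbit \<sigma> b"
proof -
  assume a: "flag c t \<in> star_white_flags b" "b \<in> B" "t < 4" "c \<in> B"
  then obtain d t' where "d \<in> orbit \<sigma> b" "t' < 2" "flag c t = flag d t'" unfolding star_white_flags_def by blast
  then show ?thesis using flag_eq_iff[of c d t t'] a sigma_orbit_closed[OF a(2)] by auto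
qed

lemma edge_Star: assumes "b \<in> B" "t < 4" shows "edge Star (flag b t) = {flag b 0, flag b 1, flag b 2, flag b 3}"
  using edge_conv[OF is_map_Star flag_in_Star[OF assms]] Star_simps[OF assms(1)] less_4_cases[OF assms(2)]
  by (elim disjE) auto

lemma card_edges_Star: "card (edges Star) = card B"
proof -
  have e: "edges Star = (\<lambda>b. {flag b 0, flag b 1, flag b 2, flag b 3}) ` B"
  proof
    show "edges Star \<subseteq> (\<lambda>b. {flag b 0, flag b 1, flag b 2, flag b 3}) ` B"
      unfolding edges_def using edge_Star Star_flag_cases by (smt (verit) image_iff subsetI)
    show "(\<lambda>b. {flag b 0, flag b 1, flag b 2, flag b 3}) ` B \<subseteq> edges Star"
      unfolding edges_def using edge_Star flag_in_Star by (smt (verit) image_iff subsetI zero_less_numeral)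
  qed
  have "inj_on (\<lambda>b. {flag b 0, flag b 1, flag b 2, flag b 3}) B"
  proof (rule inj_onI)
    fix b c assume "b \<in> B" "c \<in> B" "{flag b 0, flag b 1, flag b 2, flag b 3} = {flag c 0, flag c 1, flag c 2, flag c 3}"
    then have "flag b 0 \<in> {flag c 0, flag c 1, flag c 2, flag c 3}" by blast
    then show "b = c" using flag_eq_iff \<open>b \<in> B\<close> \<open>c \<in> B\<close> by auto
  qed
  then show ?thesis unfolding e by (rule card_image)
qed

lemma is_rooted_Star: "is_rooted Star"
  unfolding is_rooted_def
proof (intro conjI ballI)
  show "root Star \<subseteq> flags Star" unfolding Star_root using flag_in_Star by auto
next
  fix r assume "r \<in> root Star" then show "white Star r" unfolding Star_root using Star_simps by auto
next
  fix x assume x: "x \<in> flags Star"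
  obtain b t where bt: "b \<in> B" "t < 4" "x = flag b t" using Star_flag_cases[OF x] by blast
  note mf = cycle_min_facts[OF bt(1)]
  have ex: "flag (cycle_min b) 0 \<in> root Star \<and> flag (cycle_min b) 0 \<in> comp Star x"
    using mf flag_in_root star_flags_mem comp_Star(2)[OF bt(1,2)] bt(3) by simp
  show "\<exists>!r. r \<in> root Star \<and> r \<in> comp Star x"
  proof (rule ex1I[where a="flag (cycle_min b) 0" and P="\<lambda>r. r \<in> root Star \<and> r \<in> comp Star x", OF ex])
    fix r assume r: "r \<in> root Star \<and> r \<in> comp Star x"
    then obtain c where c: "c \<in> B" "c = cycle_min c" "r = flag c 0" unfolding Star_root cycle_min_def by auto
    have "c \<in> orbit \<sigma> b" using flag_in_star_flags[of c 0 b] r c bt comp_Star(2)[OF bt(1,2)] by auto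
    then have "cycle_min c = cycle_min b" using cycle_min_eq bt by blast
    then show "r = flag (cycle_min b) 0" using c by simp
  qed
qed

lemma orbit_same_col:
  assumes col: "\<forall>b\<in>B. snd (\<sigma> b) = snd b" and b: "b \<in> B" and c: "c \<in> orbit \<sigma> b"
  shows "snd c = snd b"
  using c
proof induction
  case base then show ?case using col b by simp
next
  case (step y) then show ?case using col sigma_orbit_closed[OF b step(1)] by simp
qed

lemma is_decorated_Star:
  assumes col: "\<forall>b\<in>B. snd (\<sigma> b) = snd b" and Bl: "B = boxes lam"
  shows "is_decorated lam Star"
  unfolding is_decorated_def
proof (intro conjI)
  show "\<forall>x\<in>flags Star. dec Star x \<in> boxes lam \<and> dec Star (a0 Star x) = dec Star x \<and> dec Star (a2 Star x) = dec Star x"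
  proof
    fix x assume x: "x \<in> flags Star"
    obtain b t where bt: "b \<in> B" "t < 4" "x = flag b t" using Star_flag_cases[OF x] by blast
    show "dec Star x \<in> boxes lam \<and> dec Star (a0 Star x) = dec Star x \<and> dec Star (a2 Star x) = dec Star x"
      using less_4_cases[OF bt(2)] bt Star_simps[OF bt(1)] Bl by (elim disjE) auto
  qed
  show "\<forall>x\<in>flags Star. \<forall>y\<in>flags Star. dec Star x = dec Star y \<longrightarrow> y \<in> edge Star x"
  proof (intro ballI impI)
    fix x y assume x: "x \<in> flags Star" and y: "y \<in> flags Star" and d: "dec Star x = dec Star y"
    obtain b t where bt: "b \<in> B" "t < 4" "x = flag b t" using Star_flag_cases[OF x] by blast
    obtain c t' where ct: "c \<in> B" "t' < 4" "y = flag c t'" using Star_flag_cases[OF y] by blast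
    have "b = c" using d bt ct Star_simps by auto
    then show "y \<in> edge Star x" using edge_Star[OF bt(1,2)] bt ct less_4_cases[OF ct(2)] by auto
  qed
  show "\<forall>x\<in>flags Star. \<forall>y\<in>vertex Star x. if white Star x then snd (dec Star y) = snd (dec Star x) else fst (dec Star y) = fst (dec Star x)"
  proof (intro ballI)
    fix x y assume x: "x \<in> flags Star" and y: "y \<in> vertex Star x"
    obtain b t where bt: "b \<in> B" "t < 4" "x = flag b t" using Star_flag_cases[OF x] by blast
    show "if white Star x then snd (dec Star y) = snd (dec Star x) else fst (dec Star y) = fst (dec Star x)"
    proof (cases "t < 2")
      case True
      then have "y \<in> star_white_flags b" using vertex_Star_white[OF bt(1) True] y bt by simp
      then obtain c t' where ct: "c \<in> orbit \<sigma> b" "t' < 2" "y = flag c t'" unfolding star_white_flags_def by blast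
      have "snd c = snd b" using orbit_same_col[OF col bt(1) ct(1)] .
      then show ?thesis using True bt ct Star_simps[OF bt(1)] Star_simps[OF sigma_orbit_closed(3)[OF bt(1) ct(1)]] by auto
    next
      case False
      then have "t = 2 \<or> t = 3" using bt by auto
      then have "y \<in> {flag b 2, flag b 3}" using vertex_Star_black[OF bt(1)] y bt by blast
      then show ?thesis using bt Star_simps[OF bt(1)] by auto
    qed
  qed
qed

lemma rooted_dec_Star: "rooted_dec Star"
  unfolding rooted_dec_def
proof (intro ballI)
  fix r y assume r: "r \<in> root Star" and y: "y \<in> comp Star r"
  then obtain c where c: "c \<in> B" "c = cycle_min c" "r = flag c 0" unfolding Star_root cycle_min_def by auto
  have "y \<in> star_flags c" using y comp_Star(2)[OF c(1), of 0] c by simp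
  then obtain d t where dt: "d \<in> orbit \<sigma> c" "t < 4" "y = flag d t" unfolding star_flags_def by blast
  have "cycle_min c \<le> d" using cycle_min_facts(5)[OF c(1) dt(1)] .
  then show "lex_le (dec Star r) (dec Star y)"
    using c dt Star_simps[OF c(1)] Star_simps[OF sigma_orbit_closed(3)[OF c(1) dt(1)]] lex_le_iff by auto
qed

lemma Star_in_IDrep:
  assumes col: "\<forall>b\<in>B. snd (\<sigma> b) = snd b" and Bl: "B = boxes lam"
  shows "Star \<in> IDrep (card B) lam"
  unfolding IDrep_def using Star_flags card_edges_Star is_map_Star is_bipartite_Star is_rooted_Star is_decorated_Star[OF assms]
    rooted_dec_Star by auto

lemma white_vertices_Star: "{vertex Star x | x. x \<in> flags Star \<and> white Star x} = star_white_flags ` cycle_mins"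
proof (intro set_eqI iffI)
  fix A assume "A \<in> {vertex Star x | x. x \<in> flags Star \<and> white Star x}"
  then obtain x where x: "x \<in> flags Star" "white Star x" "A = vertex Star x" by blast
  obtain b t where bt: "b \<in> B" "t < 4" "x = flag b t" using Star_flag_cases[OF x(1)] by blast
  have t: "t < 2" using x bt Star_simps by auto
  have "A = star_white_flags b" using vertex_Star_white[OF bt(1) t] x bt by simp
  also have "\<dots> = star_white_flags (cycle_min b)" unfolding star_white_flags_def using cycle_min_facts(3)[OF bt(1)] by simp
  finally show "A \<in> star_white_flags ` cycle_mins" using cycle_min_facts(6)[OF bt(1)] by blast
next
  fix A assume "A \<in> star_white_flags ` cycle_mins"
  then obtain b where b: "b \<in> cycle_mins" "A = star_white_flags b" by blast
  have bB: "b \<in> B" using b cycle_mins_subset by blast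
  have "A = vertex Star (flag b 0)" using vertex_Star_white[OF bB, of 0] b by simp
  then show "A \<in> {vertex Star x | x. x \<in> flags Star \<and> white Star x}"
    using flag_in_Star[OF bB, of 0] Star_simps[OF bB] by auto
qed

lemma comps_Star: "{comp Star x | x. x \<in> flags Star} = star_flags ` cycle_mins"
  and faces_Star: "{face Star x | x. x \<in> flags Star} = star_flags ` cycle_mins"
proof -
  have "{comp Star x | x. x \<in> flags Star} = star_flags ` cycle_mins \<and> {face Star x | x. x \<in> flags Star} = star_flags ` cycle_mins"
  proof (intro conjI set_eqI iffI)
    fix A assume "A \<in> {comp Star x | x. x \<in> flags Star}"
    then obtain x where x: "x \<in> flags Star" "A = comp Star x" by blast
    obtain b t where bt: "b \<in> B" "t < 4" "x = flag b t" using Star_flag_cases[OF x(1)] by blast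
    have "A = star_flags b" using comp_Star[OF bt(1,2)] x bt by simp
    also have "\<dots> = star_flags (cycle_min b)" unfolding star_flags_def using cycle_min_facts(3)[OF bt(1)] by simp
    finally show "A \<in> star_flags ` cycle_mins" using cycle_min_facts(6)[OF bt(1)] by blast
  next
    fix A assume "A \<in> {face Star x | x. x \<in> flags Star}"
    then obtain x where x: "x \<in> flags Star" "A = face Star x" by blast
    obtain b t where bt: "b \<in> B" "t < 4" "x = flag b t" using Star_flag_cases[OF x(1)] by blast
    have "A = star_flags b" using comp_Star[OF bt(1,2)] x bt by simp
    also have "\<dots> = star_flags (cycle_min b)" unfolding star_flags_def using cycle_min_facts(3)[OF bt(1)] by simp
    finally show "A \<in> star_flags ` cycle_mins" using cycle_min_facts(6)[OF bt(1)] by blast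
  next
    fix A assume "A \<in> star_flags ` cycle_mins"
    then obtain b where b: "b \<in> cycle_mins" "A = star_flags b" by blast
    have bB: "b \<in> B" using b cycle_mins_subset by blast
    show "A \<in> {comp Star x | x. x \<in> flags Star}" using comp_Star(2)[OF bB, of 0] b flag_in_Star[OF bB, of 0] by auto
  next
    fix A assume "A \<in> star_flags ` cycle_mins"
    then obtain b where b: "b \<in> cycle_mins" "A = star_flags b" by blast
    have bB: "b \<in> B" using b cycle_mins_subset by blast
    show "A \<in> {face Star x | x. x \<in> flags Star}" using comp_Star(1)[OF bB, of 0] b flag_in_Star[OF bB, of 0] by auto
  qed
  then show "{comp Star x | x. x \<in> flags Star} = star_flags ` cycle_mins" "{face Star x | x. x \<in> flags Star} = star_flags ` cycle_mins"
    by auto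
qed

lemma cycle_mins_orbit_eq: "b \<in> cycle_mins \<Longrightarrow> c \<in> cycle_mins \<Longrightarrow> orbit \<sigma> b = orbit \<sigma> c \<Longrightarrow> b = c"
  unfolding cycle_mins_def cycle_min_def by auto

lemma inj_on_star_white_flags: "inj_on star_white_flags cycle_mins"
proof (rule inj_onI)
  fix b c assume bc: "b \<in> cycle_mins" "c \<in> cycle_mins" "star_white_flags b = star_white_flags c"
  have B: "b \<in> B" "c \<in> B" using bc cycle_mins_subset by auto
  have "flag b 0 \<in> star_white_flags b" using star_white_flags_mem sigma_orbit(1)[OF B(1)] by simp
  then have "flag b 0 \<in> star_white_flags c" using bc(3) by simp
  then have "b \<in> orbit \<sigma> c" using flag_in_star_white_flags B by auto
  then have "orbit \<sigma> b = orbit \<sigma> c" using sigma_orbit(6) B by blast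
  then show "b = c" using cycle_mins_orbit_eq bc by blast
qed

lemma inj_on_star_flags: "inj_on star_flags cycle_mins"
proof (rule inj_onI)
  fix b c assume bc: "b \<in> cycle_mins" "c \<in> cycle_mins" "star_flags b = star_flags c"
  have B: "b \<in> B" "c \<in> B" using bc cycle_mins_subset by auto
  have "flag b 0 \<in> star_flags b" using star_flags_mem sigma_orbit(1)[OF B(1)] by simp
  then have "flag b 0 \<in> star_flags c" using bc(3) by simp
  then have "b \<in> orbit \<sigma> c" using flag_in_star_flags B by auto
  then have "orbit \<sigma> b = orbit \<sigma> c" using sigma_orbit(6) B by blast
  then show "b = c" using cycle_mins_orbit_eq bc by blast
qed

lemma card_star_flags: assumes "b \<in> B" shows "card (star_flags b) = 4 * card (orbit \<sigma> b)"
proof -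
  have e: "star_flags b = (\<lambda>(c, t). flag c t) ` (orbit \<sigma> b \<times> {0..<4})" unfolding star_flags_def by force
  have "inj_on (\<lambda>(c, t). flag c t) (orbit \<sigma> b \<times> {0..<4})"
    using flag_eq_iff sigma_orbit_closed(3)[OF assms] by (auto intro!: inj_onI)
  then have "card (star_flags b) = card (orbit \<sigma> b \<times> {0..<4::nat})" unfolding e by (rule card_image)
  then show ?thesis by (simp add: card_cartesian_product)
qed

lemma nwhite_Star: "nwhite Star = card cycle_mins"
  unfolding nwhite_def white_vertices_Star using card_image[OF inj_on_star_white_flags] .

lemma ncc_Star: "ncc Star = card cycle_mins"
  unfolding ncc_def comps_Star using card_image[OF inj_on_star_flags] .

lemma ptype_Star: "ptype p Star = (\<Prod>b\<in>cycle_mins. p (card (orbit \<sigma> b)))"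
  unfolding ptype_def faces_Star prod.reindex[OF inj_on_star_flags]
  using card_star_flags cycle_mins_subset by (intro prod.cong) auto

end

section \<open>Decorated maps with one white vertex per component\<close>

locale decorated_map =
  fixes M :: dmap and lam :: "nat list"
  assumes map: "is_map M" and bip: "is_bipartite M" and rooted: "is_rooted M"
    and decor: "is_decorated lam M" and rdec: "rooted_dec M"
    and cardE: "card (edges M) = card (boxes lam)"
begin

lemmas finB = finite_boxes[of lam]

lemmas mapD = is_mapD[OF map]

lemma finite_flags: "finite (flags M)" using map unfolding is_map_def by simp

lemma bipartite_white: "x \<in> flags M \<Longrightarrow> white M (a1 M x) = white M x" "x \<in> flags M \<Longrightarrow> white M (a2 M x) = white M x"
  "x \<in> flags M \<Longrightarrow> white M (a0 M x) \<longleftrightarrow> \<not> white M x"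
  using bip unfolding is_bipartite_def by auto

lemma involutions_vertex: "involutions_on (flags M) {a1 M, a2 M}" by (rule is_map_involutions_on[OF map]) auto
lemma involutions_edge: "involutions_on (flags M) {a0 M, a2 M}" by (rule is_map_involutions_on[OF map]) auto
lemma involutions_comp: "involutions_on (flags M) {a0 M, a1 M, a2 M}" by (rule is_map_involutions_on[OF map]) auto

lemma vertex_eq: "x \<in> flags M \<Longrightarrow> y \<in> vertex M x \<Longrightarrow> vertex M y = vertex M x"
  unfolding vertex_def by (rule orb_eq[OF involutions_vertex])
lemma edge_eq: "x \<in> flags M \<Longrightarrow> y \<in> edge M x \<Longrightarrow> edge M y = edge M x"
  unfolding edge_def by (rule orb_eq[OF involutions_edge])
lemma comp_eq: "x \<in> flags M \<Longrightarrow> y \<in> comp M x \<Longrightarrow> comp M y = comp M x"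
  unfolding comp_def by (rule orb_eq[OF involutions_comp])

lemmas orbs_sub = orbs_subset_flags[OF map]

lemma comp_step: "x \<in> flags M \<Longrightarrow> y \<in> comp M x \<Longrightarrow> a0 M y \<in> comp M x \<and> a1 M y \<in> comp M x \<and> a2 M y \<in> comp M x"
  using orb_step[of y "flags M" "{a0 M, a1 M, a2 M}" x] orbs_sub(4) unfolding comp_def by blast

lemma vertex_step: "x \<in> flags M \<Longrightarrow> y \<in> vertex M x \<Longrightarrow> a1 M y \<in> vertex M x \<and> a2 M y \<in> vertex M x"
  using orb_step[of y "flags M" "{a1 M, a2 M}" x] orbs_sub(1) unfolding vertex_def by blast

lemma self_comp: "x \<in> comp M x" unfolding comp_def by simp
lemma self_vertex: "x \<in> vertex M x" unfolding vertex_def by simp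

lemma comp_sym: "x \<in> flags M \<Longrightarrow> y \<in> flags M \<Longrightarrow> y \<in> comp M x \<Longrightarrow> x \<in> comp M y"
  using comp_eq self_comp by blast

lemma dec_edge: "x \<in> flags M \<Longrightarrow> y \<in> edge M x \<Longrightarrow> dec M y = dec M x"
proof -
  assume x: "x \<in> flags M" and y: "y \<in> edge M x"
  have "edge M x \<subseteq> {y. dec M y = dec M x}"
    unfolding edge_def
  proof (rule orb_subset_closed)
    fix u f assume "u \<in> {y. dec M y = dec M x}" "u \<in> flags M" "f \<in> {a0 M, a2 M}"
    then show "f u \<in> {y. dec M y = dec M x}" using decor unfolding is_decorated_def by auto
  qed simp
  then show ?thesis using y by blast
qed

lemma dec_in: "x \<in> flags M \<Longrightarrow> dec M x \<in> boxes lam"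
  using decor unfolding is_decorated_def by auto

lemma dec_inj: "x \<in> flags M \<Longrightarrow> y \<in> flags M \<Longrightarrow> dec M x = dec M y \<Longrightarrow> y \<in> edge M x"
  using decor unfolding is_decorated_def by auto

lemma dec_a0: "x \<in> flags M \<Longrightarrow> dec M (a0 M x) = dec M x"
  and dec_a2: "x \<in> flags M \<Longrightarrow> dec M (a2 M x) = dec M x"
  using decor unfolding is_decorated_def by auto

lemma vertex_dec: "x \<in> flags M \<Longrightarrow> y \<in> vertex M x \<Longrightarrow>
   (if white M x then snd (dec M y) = snd (dec M x) else fst (dec M y) = fst (dec M x))"
  using decor unfolding is_decorated_def by blast

lemma dec_image: "dec M ` flags M = boxes lam"
proof -
  let ?g = "\<lambda>E. dec M (SOME x. x \<in> E)"
  have g: "\<And>x. x \<in> flags M \<Longrightarrow> ?g (edge M x) = dec M x"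
  proof -
    fix x assume x: "x \<in> flags M"
    have "(SOME y. y \<in> edge M x) \<in> edge M x" by (rule someI[of _ x]) (simp add: edge_def)
    then show "?g (edge M x) = dec M x" using dec_edge[OF x] by blast
  qed
  have im: "?g ` edges M = dec M ` flags M" unfolding edges_def using g by (auto simp: image_iff)
  have "inj_on ?g (edges M)"
  proof (rule inj_onI)
    fix E E' assume "E \<in> edges M" "E' \<in> edges M" "?g E = ?g E'"
    then obtain x y where xy: "x \<in> flags M" "y \<in> flags M" "E = edge M x" "E' = edge M y" "dec M x = dec M y"
      unfolding edges_def using g by auto
    then have "y \<in> edge M x" using dec_inj by blast
    then have "edge M y = edge M x" by (rule edge_eq[OF xy(1)])
    then show "E = E'" using xy by simp
  qed
  then have "card (dec M ` flags M) = card (boxes lam)" using card_image im cardE by metis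
  moreover have "dec M ` flags M \<subseteq> boxes lam" using dec_in by blast
  ultimately show ?thesis using card_subset_eq finB by blast
qed

definition root_of :: "nat \<Rightarrow> nat" where "root_of x = (THE r. r \<in> root M \<and> r \<in> comp M x)"

lemma root_of_facts:
  assumes x: "x \<in> flags M"
  shows "root_of x \<in> root M" "root_of x \<in> comp M x" "root_of x \<in> flags M" "white M (root_of x)"
    "comp M (root_of x) = comp M x" "\<And>r. r \<in> root M \<Longrightarrow> r \<in> comp M x \<Longrightarrow> r = root_of x"
proof -
  have ex: "\<exists>!r. r \<in> root M \<and> r \<in> comp M x" using rooted x unfolding is_rooted_def by blast
  then have t: "root_of x \<in> root M \<and> root_of x \<in> comp M x" unfolding root_of_def by (rule theI')
  then show "root_of x \<in> root M" "root_of x \<in> comp M x" by auto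
  show "root_of x \<in> flags M" using t rooted unfolding is_rooted_def by blast
  show "white M (root_of x)" using t rooted unfolding is_rooted_def by blast
  show "comp M (root_of x) = comp M x" using comp_eq[OF x] t by blast
  show "\<And>r. r \<in> root M \<Longrightarrow> r \<in> comp M x \<Longrightarrow> r = root_of x" using ex t by blast
qed

lemma root_of_eq: "x \<in> flags M \<Longrightarrow> y \<in> comp M x \<Longrightarrow> root_of y = root_of x"
proof -
  assume x: "x \<in> flags M" and y: "y \<in> comp M x"
  have yf: "y \<in> flags M" using y orbs_sub(4)[OF x] by blast
  have e: "comp M y = comp M x" by (rule comp_eq[OF x y])
  have "root_of y \<in> root M" "root_of y \<in> comp M x" using root_of_facts(1,2)[OF yf] e by auto
  then show ?thesis using root_of_facts(6)[OF x] by blast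
qed

definition white_vertices :: "nat set set" where "white_vertices = {vertex M x | x. x \<in> flags M \<and> white M x}"
definition comps :: "nat set set" where "comps = {comp M x | x. x \<in> flags M}"
definition comp_of_vertex :: "nat set \<Rightarrow> nat set" where "comp_of_vertex V = comp M (SOME z. z \<in> V)"

lemma comp_of_vertex_vertex: "x \<in> flags M \<Longrightarrow> comp_of_vertex (vertex M x) = comp M x"
proof -
  assume x: "x \<in> flags M"
  have "(SOME z. z \<in> vertex M x) \<in> vertex M x" by (rule someI[of _ x]) (rule self_vertex)
  then have "(SOME z. z \<in> vertex M x) \<in> comp M x" using vertex_subset_comp by blast
  then show ?thesis unfolding comp_of_vertex_def using comp_eq[OF x] by blast
qed

lemma comp_of_vertex_image: "comp_of_vertex ` white_vertices = comps"
proof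
  show "comp_of_vertex ` white_vertices \<subseteq> comps" unfolding white_vertices_def comps_def using comp_of_vertex_vertex by auto
  show "comps \<subseteq> comp_of_vertex ` white_vertices"
  proof
    fix C assume "C \<in> comps"
    then obtain x where x: "x \<in> flags M" "C = comp M x" unfolding comps_def by blast
    have "C = comp_of_vertex (vertex M (root_of x))" using comp_of_vertex_vertex[OF root_of_facts(3)[OF x(1)]] root_of_facts(5)[OF x(1)] x by simp
    moreover have "vertex M (root_of x) \<in> white_vertices" unfolding white_vertices_def using root_of_facts[OF x(1)] by blast
    ultimately show "C \<in> comp_of_vertex ` white_vertices" by blast
  qed
qed

lemma finite_white_vertices: "finite white_vertices"
proof -
  have "white_vertices \<subseteq> vertex M ` flags M" unfolding white_vertices_def by blast
  then show ?thesis using finite_flags finite_subset by blast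
qed

lemma ncc_le_nwhite: "ncc M \<le> nwhite M"
proof -
  have "ncc M = card (comp_of_vertex ` white_vertices)" unfolding ncc_def comp_of_vertex_image comps_def ..
  also have "\<dots> \<le> card white_vertices" by (rule card_image_le[OF finite_white_vertices])
  finally show ?thesis unfolding nwhite_def white_vertices_def .
qed

text \<open>Every component contains a white vertex, the one of its root; so \<open>nwhite M = ncc M\<close>
  forces each component to have exactly one.\<close>

lemma same_vertex_if_nwhite_eq_ncc:
  assumes c: "nwhite M = ncc M" and x: "x \<in> flags M" "white M x" and y: "y \<in> comp M x" "white M y"
  shows "y \<in> vertex M x"
proof -
  have "card (comp_of_vertex ` white_vertices) = card comps" using comp_of_vertex_image by simp
  also have "\<dots> = card white_vertices" using c unfolding ncc_def nwhite_def comps_def white_vertices_def by simp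
  finally have "card (comp_of_vertex ` white_vertices) = card white_vertices" .
  then have inj: "inj_on comp_of_vertex white_vertices" using eq_card_imp_inj_on[OF finite_white_vertices] by blast
  have yf: "y \<in> flags M" using y orbs_sub(4)[OF x(1)] by blast
  have "comp_of_vertex (vertex M x) = comp_of_vertex (vertex M y)" using comp_of_vertex_vertex x yf comp_eq[OF x(1) y(1)] by simp
  moreover have "vertex M x \<in> white_vertices" "vertex M y \<in> white_vertices" unfolding white_vertices_def using x yf y by auto
  ultimately have "vertex M y = vertex M x" using inj unfolding inj_on_def by metis
  then show ?thesis using self_vertex by blast
qed

end

locale one_white_map = decorated_map +
  assumes one_white: "nwhite M = ncc M"
begin

lemma same_vertex: "x \<in> flags M \<Longrightarrow> white M x \<Longrightarrow> y \<in> comp M x \<Longrightarrow> white M y \<Longrightarrow> y \<in> vertex M x"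
  using same_vertex_if_nwhite_eq_ncc[OF one_white] by blast

text \<open>Two edges at a black vertex carry boxes in the same row; as they also reach the unique
  white vertex of their component, their boxes share a column as well, so injectivity of the
  decoration makes them equal: every black vertex is a leaf.\<close>

lemma black_leaf: assumes y: "y \<in> flags M" "\<not> white M y" shows "a1 M y = a2 M y"
proof -
  let ?z = "a1 M y"
  have zf: "?z \<in> flags M" using mapD(2)[OF y(1)] .
  have zv: "?z \<in> vertex M y" using vertex_step[OF y(1) self_vertex] by blast
  have row: "fst (dec M ?z) = fst (dec M y)" using vertex_dec[OF y(1) zv] y by simp
  have w: "white M (a0 M y)" "white M (a0 M ?z)" using bipartite_white y zf bipartite_white(1)[OF y(1)] by auto
  have c1: "a0 M y \<in> comp M y" using comp_step[OF y(1) self_comp] by blast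
  have "?z \<in> comp M y" using zv vertex_subset_comp by blast
  then have c2: "a0 M ?z \<in> comp M y" using comp_step[OF y(1)] by blast
  have a0yf: "a0 M y \<in> flags M" using mapD(1)[OF y(1)] .
  have "a0 M ?z \<in> comp M (a0 M y)" using c2 comp_eq[OF y(1) c1] by simp
  then have "a0 M ?z \<in> vertex M (a0 M y)" using same_vertex[OF a0yf w(1) _ w(2)] by blast
  then have "snd (dec M (a0 M ?z)) = snd (dec M (a0 M y))" using vertex_dec[OF a0yf] w(1) by auto
  then have col: "snd (dec M ?z) = snd (dec M y)" using dec_a0 zf y(1) by simp
  have "dec M ?z = dec M y" using row col by (simp add: prod_eq_iff)
  then have "?z \<in> edge M y" using dec_inj[OF y(1) zf] by simp
  then have "?z \<in> {y, a0 M y, a2 M y, a0 M (a2 M y)}" using edge_conv[OF map y(1)] by simp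
  moreover have "?z \<noteq> y" using mapD(8)[OF y(1)] .
  moreover have "white M ?z = white M y" using bipartite_white(1)[OF y(1)] .
  moreover have "white M (a0 M y)" "white M (a0 M (a2 M y))" using w(1) bipartite_white y mapD(3)[OF y(1)] by auto
  ultimately show ?thesis using y(2) by auto
qed

definition rot :: "nat \<Rightarrow> nat" where "rot x = a2 M (a1 M x)"

definition white_flags :: "nat set" where "white_flags = {x \<in> flags M. white M x}"

lemma white_flags_iff: "x \<in> white_flags \<longleftrightarrow> x \<in> flags M \<and> white M x" unfolding white_flags_def by simp

lemma rot_white: "x \<in> white_flags \<Longrightarrow> rot x \<in> white_flags"
  unfolding white_flags_iff rot_def using mapD bipartite_white by auto

lemma rot_in_vertex: "x \<in> white_flags \<Longrightarrow> rot x \<in> vertex M x"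
  unfolding rot_def white_flags_iff using vertex_step self_vertex by blast

lemma rot_inj: "x \<in> white_flags \<Longrightarrow> y \<in> white_flags \<Longrightarrow> rot x = rot y \<Longrightarrow> x = y"
  unfolding rot_def white_flags_iff by (metis mapD(2,5,6))

lemma a2_white: "x \<in> white_flags \<Longrightarrow> a2 M x \<in> white_flags"
  using white_flags_iff mapD bipartite_white by auto

lemma a1_white: "x \<in> white_flags \<Longrightarrow> a1 M x \<in> white_flags"
  using white_flags_iff mapD bipartite_white by auto

lemma a1a2_white: "x \<in> white_flags \<Longrightarrow> a1 M (a2 M x) \<in> white_flags"
  unfolding white_flags_iff using mapD bipartite_white by auto

lemma rot_a1a2: "x \<in> white_flags \<Longrightarrow> rot (a1 M (a2 M x)) = x"
  unfolding rot_def white_flags_iff using mapD by auto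

lemma rot_pow_white: "x \<in> white_flags \<Longrightarrow> (rot ^^ k) x \<in> white_flags"
  by (induction k) (auto simp: rot_white)

lemma rot_pow_in_vertex: "x \<in> white_flags \<Longrightarrow> (rot ^^ k) x \<in> vertex M x"
proof (induction k)
  case 0 then show ?case using self_vertex by simp
next
  case (Suc k)
  have w: "(rot ^^ k) x \<in> white_flags" using rot_pow_white Suc by blast
  have xf: "x \<in> flags M" using Suc white_flags_iff by blast
  have "rot ((rot ^^ k) x) \<in> vertex M ((rot ^^ k) x)" using rot_in_vertex[OF w] .
  also have "vertex M ((rot ^^ k) x) = vertex M x" using vertex_eq[OF xf] Suc by blast
  finally show ?case by simp
qed

lemma rot_pow_in_comp: "x \<in> white_flags \<Longrightarrow> (rot ^^ k) x \<in> comp M x"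
  using rot_pow_in_vertex vertex_subset_comp by blast

lemma rot_pow_cancel: "x \<in> white_flags \<Longrightarrow> (rot ^^ (i + d)) x = (rot ^^ i) x \<Longrightarrow> (rot ^^ d) x = x"
proof (induction i)
  case 0 then show ?case by simp
next
  case (Suc i)
  have "rot ((rot ^^ (i + d)) x) = rot ((rot ^^ i) x)" using Suc(3) by simp
  then have "(rot ^^ (i + d)) x = (rot ^^ i) x" using rot_inj rot_pow_white Suc(2) by blast
  then show ?case using Suc by blast
qed

lemma rot_period_ex: assumes "x \<in> white_flags" shows "\<exists>p>0. (rot ^^ p) x = x"
proof (rule ccontr)
  assume nx: "\<not> (\<exists>p>0. (rot ^^ p) x = x)"
  have "inj_on (\<lambda>k. (rot ^^ k) x) {0..card (flags M)}"
  proof (rule inj_onI)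
    fix i j assume "(rot ^^ i) x = (rot ^^ j) x" "i \<in> {0..card (flags M)}" "j \<in> {0..card (flags M)}"
    show "i = j"
    proof (rule ccontr)
      assume "i \<noteq> j"
      then consider "i < j" | "j < i" by linarith
      then show False
      proof cases
        case 1
        then have "(rot ^^ (i + (j - i))) x = (rot ^^ i) x" using \<open>(rot ^^ i) x = (rot ^^ j) x\<close> by simp
        then have "(rot ^^ (j - i)) x = x" using rot_pow_cancel assms by blast
        moreover have "j - i > 0" using 1 by simp
        ultimately show False using nx by blast
      next
        case 2
        then have "(rot ^^ (j + (i - j))) x = (rot ^^ j) x" using \<open>(rot ^^ i) x = (rot ^^ j) x\<close> by simp
        then have "(rot ^^ (i - j)) x = x" using rot_pow_cancel assms by blast
        moreover have "i - j > 0" using 2 by simp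
        ultimately show False using nx by blast
      qed
    qed
  qed
  moreover have "(\<lambda>k. (rot ^^ k) x) ` {0..card (flags M)} \<subseteq> flags M" using rot_pow_white assms white_flags_iff by blast
  ultimately have "card {0..card (flags M)} \<le> card (flags M)" using card_inj_on_le finite_flags by blast
  then show False by simp
qed

lemma rot_pow_add: "(rot ^^ (a + b)) x = (rot ^^ a) ((rot ^^ b) x)" by (simp add: funpow_add)

lemma rot_pow_period_mult: "(rot ^^ p) x = x \<Longrightarrow> (rot ^^ (p * q + r)) x = (rot ^^ r) x"
proof (induction q)
  case 0 then show ?case by simp
next
  case (Suc q)
  have e: "p * Suc q + r = (p * q + r) + p" by simp
  have "(rot ^^ (p * Suc q + r)) x = (rot ^^ (p * q + r)) ((rot ^^ p) x)"
    unfolding e by (rule rot_pow_add)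
  then show ?case using Suc by simp
qed

lemma rot_pow_period_shift: assumes "(rot ^^ p) x = x" shows "(rot ^^ p) ((rot ^^ k) x) = (rot ^^ k) x"
proof -
  have "(rot ^^ p) ((rot ^^ k) x) = (rot ^^ k) ((rot ^^ p) x)"
    by (metis rot_pow_add add.commute)
  then show ?thesis using assms by simp
qed

lemma a1a2_eq_rot_pow:
  assumes w: "w \<in> white_flags" and p: "p > 0" "(rot ^^ p) w = w"
  shows "a1 M (a2 M w) = (rot ^^ (p - 1)) w"
proof -
  have "rot ((rot ^^ (p - 1)) w) = (rot ^^ p) w" using p(1)
    by (metis Suc_diff_1 funpow.simps(2) o_apply)
  also have "\<dots> = rot (a1 M (a2 M w))" using p(2) rot_a1a2[OF w] by simp
  finally show ?thesis using rot_inj[OF rot_pow_white[OF w] a1a2_white[OF w]] by metis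
qed

definition rot_orbit :: "nat \<Rightarrow> nat set" where "rot_orbit x = {(rot ^^ k) x | k. True}"

lemma rot_orbit_self: "x \<in> rot_orbit x" unfolding rot_orbit_def by (auto intro: exI[of _ 0])

lemma rot_orbit_white: "x \<in> white_flags \<Longrightarrow> rot_orbit x \<subseteq> white_flags" unfolding rot_orbit_def using rot_pow_white by blast

lemma rot_orbit_rot: "y \<in> rot_orbit x \<Longrightarrow> rot y \<in> rot_orbit x"
  unfolding rot_orbit_def by (auto intro: exI[of _ "Suc k" for k])

lemma rot_orbit_pow: "y \<in> rot_orbit x \<Longrightarrow> (rot ^^ k) y \<in> rot_orbit x"
  by (induction k) (auto simp: rot_orbit_rot)

lemma rot_orbit_eq: assumes x: "x \<in> white_flags" and y: "y \<in> rot_orbit x" shows "rot_orbit y = rot_orbit x"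
proof
  show "rot_orbit y \<subseteq> rot_orbit x" using rot_orbit_pow y unfolding rot_orbit_def[of y] by blast
  obtain k where k: "y = (rot ^^ k) x" using y unfolding rot_orbit_def by blast
  obtain p where p: "p > 0" "(rot ^^ p) x = x" using rot_period_ex[OF x] by blast
  have "(rot ^^ ((p - 1) * k)) y = (rot ^^ ((p - 1) * k + k)) x" using k by (simp add: funpow_add)
  also have "(p - 1) * k + k = p * k + 0" using p(1) by (simp add: algebra_simps)
  also have "(rot ^^ (p * k + 0)) x = x" using rot_pow_period_mult[OF p(2), of k 0] by simp
  finally have "x \<in> rot_orbit y" unfolding rot_orbit_def by blast
  then show "rot_orbit x \<subseteq> rot_orbit y" using rot_orbit_pow unfolding rot_orbit_def[of x] by blast
qed

lemma a2_rot_pow: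
  assumes y: "y \<in> white_flags" and m: "a2 M y = (rot ^^ m) y"
    and p: "p > 0" "(rot ^^ p) y = y"
  shows "a2 M ((rot ^^ i) y) = (rot ^^ (m + (p - 1) * i)) y"
proof (induction i)
  case (Suc i)
  let ?z = "(rot ^^ i) y"
  have z: "?z \<in> white_flags" "a2 M ?z \<in> white_flags" using rot_pow_white[OF y] a2_white by auto
  then have "a1 M ?z \<in> flags M" using white_flags_iff mapD by blast
  then have "a2 M ((rot ^^ Suc i) y) = a1 M (a2 M (a2 M ?z))"
    using z white_flags_iff mapD by (simp add: rot_def)
  also have "\<dots> = (rot ^^ (p - 1)) (a2 M ?z)"
    using a1a2_eq_rot_pow[OF z(2) p(1)] Suc rot_pow_period_shift[OF p(2)] by simp
  also have "\<dots> = (rot ^^ ((p - 1) + (m + (p - 1) * i))) y" using Suc by (simp add: funpow_add)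
  also have "(p - 1) + (m + (p - 1) * i) = m + (p - 1) * Suc i" by simp
  finally show ?case .
qed (simp add: m)

text \<open>Conjugation by \<open>a2\<close> inverts \<open>rot\<close>; so if \<open>a2 y = rot\<^sup>m y\<close>, then \<open>a2\<close> fixes
  \<open>rot\<^sup>i y\<close> (if \<open>m = 2i\<close>) or \<open>a1\<close> fixes it (if \<open>m = 2i + 1\<close>).\<close>

lemma a2_notin_rot_orbit: assumes y: "y \<in> white_flags" shows "a2 M y \<notin> rot_orbit y"
proof
  assume "a2 M y \<in> rot_orbit y"
  then obtain m where m: "a2 M y = (rot ^^ m) y" unfolding rot_orbit_def by blast
  obtain p where p: "p > 0" "(rot ^^ p) y = y" using rot_period_ex[OF y] by blast
  note a2_conj = a2_rot_pow[OF y m p]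
  let ?z = "\<lambda>i. (rot ^^ i) y"
  have z: "?z i \<in> flags M" for i using rot_pow_white[OF y] white_flags_iff by blast
  have wrap: "(rot ^^ (2 * i + (p - 1) * i)) y = ?z i" for i
  proof -
    have e: "2 * i + (p - 1) * i = p * i + i" using p(1) by (cases p) (simp_all add: algebra_simps)
    show ?thesis unfolding e by (rule rot_pow_period_mult[OF p(2)])
  qed
  consider i where "m = 2 * i" | i where "m = 2 * i + 1" by (metis oddE evenE)
  then show False
  proof cases
    case 1
    then have "a2 M (?z i) = ?z i" using a2_conj[of i] wrap[of i] by simp
    then show False using mapD(9)[OF z] by blast
  next
    case 2
    have "a1 M (?z i) \<in> flags M" using mapD(2)[OF z] .
    then have "a1 M (?z i) = a2 M (?z (Suc i))" by (simp add: rot_def mapD(6))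
    also have "\<dots> = (rot ^^ (2 * i + (p - 1) * i + p)) y"
      using a2_conj[of "Suc i"] 2 p(1) by (cases p) (simp_all add: algebra_simps)
    also have "\<dots> = ?z i" using wrap[of i] by (simp add: funpow_add p(2))
    finally show False using mapD(8)[OF z] by blast
  qed
qed

lemma vertex_subset_rot_orbit: assumes r: "r \<in> white_flags" shows "vertex M r \<subseteq> rot_orbit r \<union> a2 M ` rot_orbit r"
  unfolding vertex_def
proof (rule orb_subset_closed)
  show "r \<in> rot_orbit r \<union> a2 M ` rot_orbit r" using rot_orbit_self by blast
next
  fix u f assume u: "u \<in> rot_orbit r \<union> a2 M ` rot_orbit r" "u \<in> flags M" "f \<in> {a1 M, a2 M}"
  obtain p where p: "p > 0" "(rot ^^ p) r = r" using rot_period_ex[OF r] by blast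
  show "f u \<in> rot_orbit r \<union> a2 M ` rot_orbit r"
  proof (cases "u \<in> rot_orbit r")
    case True
    then have w: "u \<in> white_flags" using rot_orbit_white r by blast
    have a1u: "a1 M u \<in> flags M" using w white_flags_iff mapD by blast
    have "a1 M u = a2 M (rot u)" by (simp only: rot_def[of u] mapD(6)[OF a1u])
    then show ?thesis using u(3) True rot_orbit_rot by auto
  next
    case False
    then obtain w where w: "w \<in> rot_orbit r" "u = a2 M w" using u(1) by blast
    have wW: "w \<in> white_flags" using w rot_orbit_white r by blast
    have a2u: "a2 M u = w" using w mapD wW white_flags_iff by auto
    obtain k where k: "w = (rot ^^ k) r" using w unfolding rot_orbit_def by blast
    have "a1 M u = (rot ^^ (p - 1)) w" using a1a2_eq_rot_pow[OF wW p(1)] rot_pow_period_shift[OF p(2)] k w by simp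
    then have "a1 M u \<in> rot_orbit r" using rot_orbit_pow w by simp
    then show ?thesis using u(3) a2u w by auto
  qed
qed

lemma root_of_white: "x \<in> flags M \<Longrightarrow> root_of x \<in> white_flags" using root_of_facts white_flags_iff by blast

lemma root_of_a: assumes "x \<in> flags M"
  shows "root_of (a0 M x) = root_of x" "root_of (a1 M x) = root_of x" "root_of (a2 M x) = root_of x"
  using root_of_eq[OF assms] comp_step[OF assms self_comp] by auto

lemma root_of_rot_pow: "x \<in> white_flags \<Longrightarrow> root_of ((rot ^^ k) x) = root_of x"
  using root_of_eq rot_pow_in_comp white_flags_iff by blast

lemma in_vertex_root_of: assumes "x \<in> white_flags" shows "x \<in> vertex M (root_of x)"
proof -
  have xf: "x \<in> flags M" "white M x" using assms white_flags_iff by auto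
  have "x \<in> comp M (root_of x)" using comp_sym[OF xf(1) root_of_facts(3)[OF xf(1)] root_of_facts(2)[OF xf(1)]] .
  then show ?thesis using same_vertex[OF root_of_facts(3)[OF xf(1)] root_of_facts(4)[OF xf(1)] _ xf(2)] by blast
qed

text \<open>The white flags at the vertex of the root split into the \<open>rot\<close>-orbit of the root and
  its \<open>a2\<close>-image; the former, the flags seen when turning around the vertex in the direction
  fixed by the root, are called positive.  Every box labels exactly one positive flag, and
  following \<open>rot\<close> on positive flags permutes the boxes.\<close>

definition positive :: "nat \<Rightarrow> bool" where "positive x \<longleftrightarrow> x \<in> rot_orbit (root_of x)"

lemma positive_or_a2: assumes x: "x \<in> white_flags" shows "positive x \<or> positive (a2 M x)"
proof -
  have xf: "x \<in> flags M" using x white_flags_iff by auto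
  have "x \<in> rot_orbit (root_of x) \<union> a2 M ` rot_orbit (root_of x)" using vertex_subset_rot_orbit[OF root_of_white[OF xf]] in_vertex_root_of[OF x] by blast
  moreover have "x \<in> a2 M ` rot_orbit (root_of x) \<Longrightarrow> a2 M x \<in> rot_orbit (root_of x)"
  proof -
    assume "x \<in> a2 M ` rot_orbit (root_of x)"
    then obtain w where w: "w \<in> rot_orbit (root_of x)" "x = a2 M w" by blast
    have "w \<in> flags M" using w rot_orbit_white root_of_white[OF xf] white_flags_iff by blast
    then show ?thesis using w mapD by auto
  qed
  ultimately show ?thesis unfolding positive_def using root_of_a(3)[OF xf] by auto
qed

lemma not_positive_both: assumes x: "x \<in> white_flags" and p: "positive x" shows "\<not> positive (a2 M x)"
proof
  assume p2: "positive (a2 M x)"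
  have xf: "x \<in> flags M" using x white_flags_iff by auto
  have e: "rot_orbit x = rot_orbit (root_of x)" using rot_orbit_eq[OF root_of_white[OF xf]] p positive_def by blast
  have "a2 M x \<in> rot_orbit x" using p2 e root_of_a(3)[OF xf] unfolding positive_def by simp
  then show False using a2_notin_rot_orbit[OF x] by blast
qed

lemma positive_a2: "x \<in> white_flags \<Longrightarrow> positive (a2 M x) \<longleftrightarrow> \<not> positive x"
  using positive_or_a2 not_positive_both a2_white mapD white_flags_iff by (metis)

lemma positive_rot: assumes x: "x \<in> white_flags" and p: "positive x" shows "positive (rot x)"
proof -
  have "rot x \<in> rot_orbit (root_of x)" using rot_orbit_rot p positive_def by blast
  moreover have "root_of (rot x) = root_of x" using root_of_rot_pow[OF x, of 1] by simp
  ultimately show ?thesis unfolding positive_def by simp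
qed

lemma a1_eq_a2_rot: "x \<in> white_flags \<Longrightarrow> a1 M x = a2 M (rot x)"
  unfolding rot_def using white_flags_iff mapD by auto

lemma positive_a1: assumes x: "x \<in> white_flags" shows "positive (a1 M x) \<longleftrightarrow> \<not> positive x"
proof
  assume "positive (a1 M x)"
  then have "\<not> positive (rot x)" using a1_eq_a2_rot[OF x] positive_a2 rot_white[OF x] by simp
  then show "\<not> positive x" using positive_rot x by blast
next
  assume np: "\<not> positive x"
  have xf: "x \<in> flags M" using x white_flags_iff by auto
  have p2: "positive (a2 M x)" using positive_a2 x np by blast
  have w: "a2 M x \<in> white_flags" using a2_white[OF x] .
  obtain p where p: "p > 0" "(rot ^^ p) (a2 M x) = a2 M x" using rot_period_ex[OF w] by blast
  have "a1 M x = a1 M (a2 M (a2 M x))" using mapD xf by simp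
  also have "\<dots> = (rot ^^ (p - 1)) (a2 M x)" using a1a2_eq_rot_pow[OF w p] .
  finally have "a1 M x \<in> rot_orbit (root_of (a2 M x))" using rot_orbit_pow p2 positive_def by simp
  then show "positive (a1 M x)" unfolding positive_def using root_of_a[OF xf] by simp
qed

definition pos_flag :: "nat \<times> nat \<Rightarrow> nat" where "pos_flag b = (THE x. x \<in> white_flags \<and> positive x \<and> dec M x = b)"

lemma pos_flag_unique: assumes "x \<in> white_flags" "positive x" "y \<in> white_flags" "positive y" "dec M x = dec M y" shows "x = y"
proof -
  have xf: "x \<in> flags M" "y \<in> flags M" using assms white_flags_iff by auto
  have "y \<in> edge M x" using dec_inj[OF xf assms(5)] .
  then have "y \<in> {x, a0 M x, a2 M x, a0 M (a2 M x)}" using edge_conv[OF map xf(1)] by simp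
  moreover have "\<not> white M (a0 M x)" "\<not> white M (a0 M (a2 M x))"
    using assms(1) white_flags_iff bipartite_white mapD xf by auto
  moreover have "white M y" using assms white_flags_iff by auto
  moreover have "\<not> positive (a2 M x)" using positive_a2 assms by blast
  ultimately show ?thesis using assms(4) by auto
qed

lemma pos_flag_ex: assumes b: "b \<in> boxes lam" shows "\<exists>x. x \<in> white_flags \<and> positive x \<and> dec M x = b"
proof -
  obtain y where y: "y \<in> flags M" "dec M y = b" using dec_image b by (metis imageE)
  define w where "w = (if white M y then y else a0 M y)"
  have w: "w \<in> white_flags" "dec M w = b" unfolding w_def using y white_flags_iff mapD bipartite_white dec_a0 by auto
  have "dec M (a2 M w) = b" using dec_a2 w white_flags_iff by auto
  then show ?thesis using positive_or_a2[OF w(1)] w a2_white[OF w(1)] by blast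
qed

lemma pos_flag_facts: assumes b: "b \<in> boxes lam" shows "pos_flag b \<in> white_flags" "positive (pos_flag b)" "dec M (pos_flag b) = b"
proof -
  have "\<exists>!x. x \<in> white_flags \<and> positive x \<and> dec M x = b" using pos_flag_ex[OF b] pos_flag_unique by blast
  then have "pos_flag b \<in> white_flags \<and> positive (pos_flag b) \<and> dec M (pos_flag b) = b" unfolding pos_flag_def by (rule theI')
  then show "pos_flag b \<in> white_flags" "positive (pos_flag b)" "dec M (pos_flag b) = b" by auto
qed

lemma pos_flag_dec: assumes "x \<in> white_flags" "positive x" shows "pos_flag (dec M x) = x"
proof -
  have b: "dec M x \<in> boxes lam" using dec_in assms white_flags_iff by auto
  show ?thesis using pos_flag_unique[OF pos_flag_facts(1,2)[OF b] assms] pos_flag_facts(3)[OF b] by simp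
qed

definition box_perm :: "nat \<times> nat \<Rightarrow> nat \<times> nat" where
  "box_perm b = (if b \<in> boxes lam then dec M (rot (pos_flag b)) else b)"

lemma box_perm_dec: assumes "x \<in> white_flags" "positive x" shows "box_perm (dec M x) = dec M (rot x)"
  using assms pos_flag_dec dec_in white_flags_iff unfolding box_perm_def by auto

lemma box_perm_in: "b \<in> boxes lam \<Longrightarrow> box_perm b \<in> boxes lam"
  unfolding box_perm_def using pos_flag_facts rot_white dec_in white_flags_iff by auto

lemma box_perm_permutes: "box_perm permutes boxes lam"
proof (rule bij_imp_permutes)
  have inj: "inj_on box_perm (boxes lam)"
  proof (rule inj_onI)
    fix b c assume bc: "b \<in> boxes lam" "c \<in> boxes lam" "box_perm b = box_perm c"
    have r: "rot (pos_flag b) \<in> white_flags" "positive (rot (pos_flag b))" "rot (pos_flag c) \<in> white_flags" "positive (rot (pos_flag c))"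
      using pos_flag_facts[OF bc(1)] pos_flag_facts[OF bc(2)] rot_white positive_rot by auto
    have "dec M (rot (pos_flag b)) = dec M (rot (pos_flag c))" using bc unfolding box_perm_def by simp
    then have "rot (pos_flag b) = rot (pos_flag c)" using pos_flag_unique r by blast
    then have "pos_flag b = pos_flag c" using rot_inj pos_flag_facts bc by blast
    then show "b = c" using pos_flag_facts(3) bc by metis
  qed
  have "box_perm ` boxes lam = boxes lam" using endo_inj_surj[OF finB _ inj] box_perm_in by blast
  then show "bij_betw box_perm (boxes lam) (boxes lam)" using inj bij_betw_def by blast
qed (simp add: box_perm_def)

lemma box_perm_col: "b \<in> boxes lam \<Longrightarrow> snd (box_perm b) = snd b"
proof -
  assume b: "b \<in> boxes lam"
  have w: "pos_flag b \<in> white_flags" using pos_flag_facts[OF b] by simp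
  have "rot (pos_flag b) \<in> vertex M (pos_flag b)" using rot_in_vertex[OF w] .
  then have "snd (dec M (rot (pos_flag b))) = snd (dec M (pos_flag b))" using vertex_dec w white_flags_iff by fastforce
  then show ?thesis using b pos_flag_facts[OF b] unfolding box_perm_def by simp
qed

lemma box_perm_pow: assumes "x \<in> white_flags" "positive x" shows "(box_perm ^^ k) (dec M x) = dec M ((rot ^^ k) x)"
proof (induction k)
  case 0 then show ?case by simp
next
  case (Suc k)
  have w: "(rot ^^ k) x \<in> white_flags" "positive ((rot ^^ k) x)"
  proof -
    show "(rot ^^ k) x \<in> white_flags" using rot_pow_white assms by blast
    have "(rot ^^ k) x \<in> rot_orbit (root_of x)" using rot_orbit_pow assms positive_def by blast
    then show "positive ((rot ^^ k) x)" unfolding positive_def using root_of_rot_pow assms by simp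
  qed
  show ?case using Suc box_perm_dec[OF w] by simp
qed

lemma orbit_box_perm_dec: assumes "x \<in> white_flags" "positive x"
  shows "orbit box_perm (dec M x) = {dec M ((rot ^^ k) x) | k. True}"
proof -
  have p: "permutation box_perm" using box_perm_permutes finB permutation_permutes by blast
  show ?thesis unfolding orbit_altdef_permutation[OF p] using box_perm_pow[OF assms] by simp
qed

lemma positive_root_of: "x \<in> flags M \<Longrightarrow> positive (root_of x)"
  unfolding positive_def using root_of_eq[OF _ root_of_facts(2)] root_of_facts(3) rot_orbit_self by metis

lemma root_of_root: "x \<in> root M \<Longrightarrow> root_of x = x"
proof -
  assume r: "x \<in> root M"
  then have xf: "x \<in> flags M" using rooted is_rooted_def by blast
  show ?thesis using root_of_facts(6)[OF xf r self_comp] by simp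
qed

end

section \<open>A map with one white vertex per component is a star map\<close>

context one_white_map begin

lemma star_construction_box_perm: "star_construction (boxes lam) (box_index lam) box_perm"
  unfolding star_construction_def using finB bij_betw_box_index box_perm_permutes by blast

abbreviation M_star :: dmap where "M_star \<equiv> star_construction.Star (boxes lam) (box_index lam) box_perm"
abbreviation box_flag :: "nat \<times> nat \<Rightarrow> nat \<Rightarrow> nat" where "box_flag \<equiv> star_construction.flag (box_index lam)"

lemmas M_star_simps = star_construction.Star_simps[OF star_construction_box_perm]
lemmas box_flag_eq_iff = star_construction.flag_eq_iff[OF star_construction_box_perm]
lemmas box_flag_in_M_star = star_construction.flag_in_Star[OF star_construction_box_perm]

definition flag_type :: "nat \<Rightarrow> nat" where
  "flag_type x = (if white M x then (if positive x then 0 else 1) else (if positive (a0 M x) then 2 else 3))"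

definition to_star :: "nat \<Rightarrow> nat" where "to_star x = box_flag (dec M x) (flag_type x)"

lemma flag_type_less: "flag_type x < 4" unfolding flag_type_def by auto

lemma to_star_in: "x \<in> flags M \<Longrightarrow> to_star x \<in> flags M_star"
  unfolding to_star_def using box_flag_in_M_star dec_in flag_type_less by blast

lemma a0_white: "x \<in> flags M \<Longrightarrow> \<not> white M x \<Longrightarrow> a0 M x \<in> white_flags"
  using white_flags_iff mapD bipartite_white by auto

lemma inj_on_to_star: "inj_on to_star (flags M)"
proof (rule inj_onI)
  fix x y assume x: "x \<in> flags M" and y: "y \<in> flags M" and e: "to_star x = to_star y"
  have d: "dec M x = dec M y" "flag_type x = flag_type y" using e box_flag_eq_iff[OF dec_in[OF x] dec_in[OF y] flag_type_less flag_type_less]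
    unfolding to_star_def by auto
  have "y \<in> edge M x" using dec_inj[OF x y d(1)] .
  then have yy: "y \<in> {x, a0 M x, a2 M x, a0 M (a2 M x)}" using edge_conv[OF map x] by simp
  have w: "white M (a0 M x) \<longleftrightarrow> \<not> white M x" "white M (a2 M x) \<longleftrightarrow> white M x"
    "white M (a0 M (a2 M x)) \<longleftrightarrow> \<not> white M x" using bipartite_white x mapD by auto
  have wy: "white M y \<longleftrightarrow> white M x" using d(2) unfolding flag_type_def by (auto split: if_splits)
  show "x = y"
  proof (cases "white M x")
    case True
    then have xw: "x \<in> white_flags" using x white_flags_iff by auto
    have "y = x \<or> y = a2 M x" using yy w wy True by auto
    moreover have "y = a2 M x \<Longrightarrow> False"
    proof -
      assume "y = a2 M x"
      then have "positive y \<longleftrightarrow> \<not> positive x" using positive_a2[OF xw] by simp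
      then show False using d(2) True wy unfolding flag_type_def by (auto split: if_splits)
    qed
    ultimately show ?thesis by auto
  next
    case False
    have a0w: "a0 M x \<in> white_flags" using a0_white[OF x False] .
    have "y = x \<or> y = a2 M x" using yy w wy False by auto
    moreover have "y = a2 M x \<Longrightarrow> False"
    proof -
      assume "y = a2 M x"
      then have "a0 M y = a2 M (a0 M x)" using mapD x by simp
      then have "positive (a0 M y) \<longleftrightarrow> \<not> positive (a0 M x)" using positive_a2[OF a0w] by simp
      then show False using d(2) False wy unfolding flag_type_def by (auto split: if_splits)
    qed
    ultimately show ?thesis by auto
  qed
qed

lemma to_star_surj: "flags M_star \<subseteq> to_star ` flags M"
proof
  fix z assume z: "z \<in> flags M_star"
  obtain b t where bt: "b \<in> boxes lam" "t < 4" "z = box_flag b t"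
    using star_construction.Star_flag_cases[OF star_construction_box_perm z] by blast
  note pfb = pos_flag_facts[OF bt(1)]
  let ?x = "pos_flag b"
  have xf: "?x \<in> flags M" "white M ?x" using pfb white_flags_iff by auto
  have "to_star ?x = box_flag b 0" unfolding to_star_def flag_type_def using pfb xf by simp
  moreover have "to_star (a2 M ?x) = box_flag b 1" unfolding to_star_def flag_type_def
    using pfb xf bipartite_white positive_a2 dec_a2 by simp
  moreover have "to_star (a0 M ?x) = box_flag b 2" unfolding to_star_def flag_type_def
    using pfb xf bipartite_white mapD dec_a0 by simp
  moreover have "to_star (a0 M (a2 M ?x)) = box_flag b 3" unfolding to_star_def flag_type_def
    using pfb xf bipartite_white mapD dec_a0 dec_a2 positive_a2 by simp
  moreover have "?x \<in> flags M" "a2 M ?x \<in> flags M" "a0 M ?x \<in> flags M" "a0 M (a2 M ?x) \<in> flags M"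
    using xf mapD by auto
  ultimately show "z \<in> to_star ` flags M" using bt star_construction.less_4_cases[OF star_construction_box_perm] by (metis image_eqI)
qed

lemma bij_betw_to_star: "bij_betw to_star (flags M) (flags M_star)"
  unfolding bij_betw_def using inj_on_to_star to_star_surj to_star_in by blast

lemma inv_box_perm: "b \<in> boxes lam \<Longrightarrow> inv box_perm (box_perm b) = b"
  using box_perm_permutes permutes_inverses(2) by metis

lemma dec_a1_positive:
  assumes "x \<in> white_flags" "positive x"
  shows "dec M (a1 M x) = box_perm (dec M x)"
proof -
  have "dec M (a1 M x) = dec M (rot x)"
    unfolding rot_def using assms(1) dec_a2 mapD white_flags_iff by simp
  also have "\<dots> = box_perm (dec M x)" using box_perm_dec[OF assms] by simp
  finally show ?thesis .
qed

lemma dec_a1_negative: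
  assumes x: "x \<in> white_flags" "\<not> positive x"
  shows "dec M (a1 M x) = inv box_perm (dec M x)"
proof -
  have xf: "x \<in> flags M" using x white_flags_iff by blast
  have "box_perm (dec M (a1 M x)) = dec M (rot (a1 M x))"
    using box_perm_dec a1_white positive_a1 x by blast
  also have "rot (a1 M x) = a2 M x" unfolding rot_def using mapD xf by simp
  finally have "box_perm (dec M (a1 M x)) = dec M x" using dec_a2 xf by simp
  then show ?thesis using inv_box_perm dec_in mapD xf by metis
qed

lemma to_star_a_white:
  assumes x: "x \<in> white_flags"
  shows "to_star (a0 M x) = a0 M_star (to_star x)" "to_star (a1 M x) = a1 M_star (to_star x)"
    "to_star (a2 M x) = a2 M_star (to_star x)"
proof -
  have xf: "x \<in> flags M" "white M x" using x white_flags_iff by auto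
  note facts = M_star_simps[OF dec_in[OF xf(1)]] bipartite_white[OF xf(1)] mapD[OF xf(1)]
    dec_a0[OF xf(1)] dec_a2[OF xf(1)] positive_a1[OF x] positive_a2[OF x] xf(2)
  show "to_star (a0 M x) = a0 M_star (to_star x)" "to_star (a1 M x) = a1 M_star (to_star x)"
    "to_star (a2 M x) = a2 M_star (to_star x)"
    using facts dec_a1_positive[OF x] dec_a1_negative[OF x]
    unfolding to_star_def flag_type_def by (cases "positive x"; simp)+
qed

lemma to_star_a_black:
  assumes x: "x \<in> flags M" "\<not> white M x"
  shows "to_star (a0 M x) = a0 M_star (to_star x)" "to_star (a1 M x) = a1 M_star (to_star x)"
    "to_star (a2 M x) = a2 M_star (to_star x)"
proof -
  note facts = M_star_simps[OF dec_in[OF x(1)]] bipartite_white[OF x(1)] mapD[OF x(1)]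
    dec_a0[OF x(1)] dec_a2[OF x(1)] positive_a2[OF a0_white[OF x]] black_leaf[OF x] x(2)
  show "to_star (a0 M x) = a0 M_star (to_star x)" "to_star (a1 M x) = a1 M_star (to_star x)"
    "to_star (a2 M x) = a2 M_star (to_star x)"
    using facts unfolding to_star_def flag_type_def by (cases "positive (a0 M x)"; simp)+
qed

lemma to_star_a:
  assumes "x \<in> flags M"
  shows "to_star (a0 M x) = a0 M_star (to_star x)" "to_star (a1 M x) = a1 M_star (to_star x)"
    "to_star (a2 M x) = a2 M_star (to_star x)"
  using to_star_a_white to_star_a_black assms white_flags_iff by (cases "white M x"; blast)+

lemma white_to_star: "x \<in> flags M \<Longrightarrow> white M_star (to_star x) = white M x"
  unfolding to_star_def using M_star_simps(13)[OF dec_in] flag_type_less unfolding flag_type_def by auto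

lemma dec_to_star: "x \<in> flags M \<Longrightarrow> dec M_star (to_star x) = dec M x"
  unfolding to_star_def using M_star_simps(14)[OF dec_in] flag_type_less by auto

lemma orbit_box_perm_subset: assumes x: "x \<in> white_flags" "positive x" shows "orbit box_perm (dec M x) \<subseteq> dec M ` comp M x"
  using orbit_box_perm_dec[OF x] rot_pow_in_comp[OF x(1)] by blast

lemma dec_root_eq_Min_orbit:
  assumes r: "r \<in> root M"
  shows "Min (orbit box_perm (dec M r)) = dec M r"
proof (rule Min_eqI)
  have rf: "r \<in> flags M" and rw: "r \<in> white_flags"
    using rooted r unfolding is_rooted_def white_flags_iff by auto
  have p: "positive r" using positive_root_of[OF rf] root_of_root[OF r] by simp
  note orbit = perm_orbit_facts[OF box_perm_permutes finB dec_in[OF rf]]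
  show "finite (orbit box_perm (dec M r))" "dec M r \<in> orbit box_perm (dec M r)" using orbit(1,5) by auto
  fix c assume "c \<in> orbit box_perm (dec M r)"
  then obtain y where "y \<in> comp M r" "c = dec M y" using orbit_box_perm_subset[OF rw p] by blast
  then show "dec M r \<le> c" using rdec r unfolding rooted_dec_def lex_le_iff by blast
qed

lemma orbit_box_perm_root_of:
  assumes x: "x \<in> white_flags" "positive x"
  shows "orbit box_perm (dec M x) = orbit box_perm (dec M (root_of x))"
proof -
  have xf: "x \<in> flags M" using x white_flags_iff by blast
  obtain k where k: "x = (rot ^^ k) (root_of x)" using x(2) unfolding positive_def rot_orbit_def by blast
  have "dec M x = dec M ((rot ^^ k) (root_of x))" using k by (rule arg_cong)
  then have "dec M x \<in> {dec M ((rot ^^ k) (root_of x)) | k. True}" by blast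
  then have "dec M x \<in> orbit box_perm (dec M (root_of x))"
    using orbit_box_perm_dec[OF root_of_white[OF xf] positive_root_of[OF xf]] by simp
  then show ?thesis
    using perm_orbit_facts(6)[OF box_perm_permutes finB dec_in[OF root_of_facts(3)[OF xf]]] by blast
qed

lemma root_if_dec_eq_Min_orbit:
  assumes x: "x \<in> white_flags" "positive x" and min: "dec M x = Min (orbit box_perm (dec M x))"
  shows "x \<in> root M"
proof -
  let ?r = "root_of x"
  have xf: "x \<in> flags M" using x white_flags_iff by blast
  note r = root_of_facts[OF xf]
  have "dec M ?r \<le> dec M x"
    using rdec r(1) comp_sym[OF xf r(3) r(2)] unfolding rooted_dec_def lex_le_iff by blast
  moreover have "dec M x \<le> dec M ?r"
  proof -
    have "finite (orbit box_perm (dec M x))"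
      using perm_orbit_facts(5)[OF box_perm_permutes finB dec_in[OF xf]] .
    moreover have "dec M ?r \<in> orbit box_perm (dec M x)"
      using orbit_box_perm_root_of[OF x] perm_orbit_facts(1)[OF box_perm_permutes finB dec_in[OF r(3)]]
      by simp
    ultimately show ?thesis using Min_le min by metis
  qed
  ultimately have "x = ?r"
    using pos_flag_unique[OF x root_of_white[OF xf] positive_root_of[OF xf]] by simp
  then show ?thesis using r(1) by simp
qed

lemma to_star_root_iff: assumes x: "x \<in> flags M" shows "to_star x \<in> root M_star \<longleftrightarrow> x \<in> root M"
proof
  assume r: "x \<in> root M"
  have "white M x" using rooted r unfolding is_rooted_def by blast
  moreover have "positive x" using positive_root_of[OF x] root_of_root[OF r] by simp
  ultimately have px: "to_star x = box_flag (dec M x) 0" unfolding to_star_def flag_type_def by simp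
  have "dec M x \<in> boxes lam \<and> dec M x = Min (orbit box_perm (dec M x))"
    using dec_in[OF x] dec_root_eq_Min_orbit[OF r] by simp
  then show "to_star x \<in> root M_star"
    unfolding px star_construction.Star_root[OF star_construction_box_perm] by blast
next
  assume "to_star x \<in> root M_star"
  then obtain c where c: "c \<in> boxes lam" "c = Min (orbit box_perm c)" "to_star x = box_flag c 0"
    unfolding star_construction.Star_root[OF star_construction_box_perm] by blast
  have "dec M x = c" "flag_type x = 0"
    using c(3) box_flag_eq_iff[OF dec_in[OF x] c(1) flag_type_less, of 0] unfolding to_star_def by auto
  then show "x \<in> root M"
    using root_if_dec_eq_Min_orbit c(2) x white_flags_iff unfolding flag_type_def
    by (auto split: if_splits)
qed

lemma iso_by_to_star: "iso_by to_star M M_star"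
  unfolding iso_by_def using bij_betw_to_star to_star_a white_to_star dec_to_star to_star_root_iff by blast

end

locale one_white_map_iso =
  m: one_white_map M lam + n: one_white_map N lam for M N lam +
  fixes \<psi> assumes iso: "iso_by \<psi> M N"
begin

lemma iso_flags: "x \<in> flags M \<Longrightarrow> \<psi> x \<in> flags N"
  by (rule bij_betw_apply[OF conjunct1[OF iso[unfolded iso_by_def]]])

lemma iso_commute:
  assumes "x \<in> flags M"
  shows "\<psi> (a1 M x) = a1 N (\<psi> x)" "\<psi> (a2 M x) = a2 N (\<psi> x)" "white N (\<psi> x) = white M x"
    "dec N (\<psi> x) = dec M x" "\<psi> x \<in> root N \<longleftrightarrow> x \<in> root M"
  using bspec[OF conjunct2[OF iso[unfolded iso_by_def]] assms] by simp_all

lemma iso_white_flags: "x \<in> m.white_flags \<Longrightarrow> \<psi> x \<in> n.white_flags"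
  unfolding m.white_flags_iff n.white_flags_iff using iso_flags iso_commute(3) by simp

lemma iso_root_of:
  assumes x: "x \<in> flags M"
  shows "\<psi> (m.root_of x) = n.root_of (\<psi> x)"
proof -
  have "\<psi> (m.root_of x) \<in> root N" using iso_commute(5) m.root_of_facts(1,3)[OF x] by blast
  moreover have "\<psi> (m.root_of x) \<in> comp N (\<psi> x)"
    using iso_by_comp_image[OF iso m.map x] m.root_of_facts(2)[OF x] by blast
  ultimately show ?thesis using n.root_of_facts(6)[OF iso_flags[OF x]] by blast
qed

lemma iso_rot_pow: "x \<in> m.white_flags \<Longrightarrow> \<psi> ((m.rot ^^ k) x) = (n.rot ^^ k) (\<psi> x)"
proof (induction k)
  case (Suc k)
  let ?y = "(m.rot ^^ k) x"
  have "?y \<in> flags M" "a1 M ?y \<in> flags M"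
    using Suc.prems m.rot_pow_white m.white_flags_iff m.mapD by blast+
  then have "\<psi> (m.rot ?y) = n.rot (\<psi> ?y)" unfolding m.rot_def n.rot_def by (simp add: iso_commute)
  then show ?case using Suc by simp
qed simp

lemma iso_positive:
  assumes x: "x \<in> m.white_flags"
  shows "n.positive (\<psi> x) \<longleftrightarrow> m.positive x"
proof -
  have xf: "x \<in> flags M" using x m.white_flags_iff by blast
  note rot = iso_rot_pow[OF m.root_of_white[OF xf]]
  have inj: "inj_on \<psi> (flags M)" using iso unfolding iso_by_def bij_betw_def by blast
  have in_M: "(m.rot ^^ k) (m.root_of x) \<in> flags M" for k
    using m.rot_pow_white[OF m.root_of_white[OF xf]] m.white_flags_iff by blast
  have "\<psi> x = (n.rot ^^ k) (n.root_of (\<psi> x)) \<longleftrightarrow> x = (m.rot ^^ k) (m.root_of x)" for k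
  proof -
    have "(n.rot ^^ k) (n.root_of (\<psi> x)) = \<psi> ((m.rot ^^ k) (m.root_of x))"
      using rot[of k] iso_root_of[OF xf] by simp
    then show ?thesis using inj_on_eq_iff[OF inj xf in_M] by simp
  qed
  then show ?thesis unfolding m.positive_def n.positive_def m.rot_orbit_def n.rot_orbit_def by blast
qed

lemma iso_pos_flag:
  assumes "b \<in> boxes lam"
  shows "n.pos_flag b = \<psi> (m.pos_flag b)"
proof -
  note pf = m.pos_flag_facts[OF assms]
  have "\<psi> (m.pos_flag b) \<in> n.white_flags" using iso_white_flags[OF pf(1)] .
  moreover have "n.positive (\<psi> (m.pos_flag b))" using iso_positive[OF pf(1)] pf(2) by simp
  moreover have "dec N (\<psi> (m.pos_flag b)) = b" using iso_commute(4) pf m.white_flags_iff by simp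
  ultimately show ?thesis using n.pos_flag_dec by fastforce
qed

lemma iso_box_perm: "m.box_perm = n.box_perm"
proof
  fix b
  show "m.box_perm b = n.box_perm b"
  proof (cases "b \<in> boxes lam")
    case True
    note pf = m.pos_flag_facts[OF True]
    have rf: "m.rot (m.pos_flag b) \<in> flags M" using m.rot_white pf m.white_flags_iff by blast
    have "n.box_perm b = dec N (n.rot (\<psi> (m.pos_flag b)))"
      unfolding n.box_perm_def using True iso_pos_flag[OF True] by simp
    also have "\<dots> = dec N (\<psi> (m.rot (m.pos_flag b)))" using iso_rot_pow[OF pf(1), of 1] by simp
    also have "\<dots> = m.box_perm b" unfolding m.box_perm_def using True iso_commute(4)[OF rf] by simp
    finally show ?thesis by simp
  qed (simp add: m.box_perm_def n.box_perm_def)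
qed

end

lemma box_perm_iso_by:
  assumes "one_white_map M lam" "one_white_map N lam" "iso_by \<psi> M N"
  shows "one_white_map.box_perm M lam = one_white_map.box_perm N lam"
  using one_white_map_iso.iso_box_perm assms
  unfolding one_white_map_iso_def one_white_map_iso_axioms_def by blast

definition col_perms :: "nat list \<Rightarrow> (nat \<times> nat \<Rightarrow> nat \<times> nat) set" where
  "col_perms lam = {\<sigma>. \<sigma> permutes boxes lam \<and> (\<forall>b\<in>boxes lam. snd (\<sigma> b) = snd b)}"

definition star_of :: "nat list \<Rightarrow> (nat \<times> nat \<Rightarrow> nat \<times> nat) \<Rightarrow> dmap" where
  "star_of lam \<sigma> = star_construction.Star (boxes lam) (box_index lam) \<sigma>"

locale col_star =
  fixes lam :: "nat list" and \<sigma> :: "nat \<times> nat \<Rightarrow> nat \<times> nat"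
  assumes col_perm: "\<sigma> \<in> col_perms lam"
begin

sublocale star_construction "boxes lam" "box_index lam" \<sigma>
  using col_perm finite_boxes bij_betw_box_index unfolding star_construction_def col_perms_def by blast

lemma star_of_eq: "star_of lam \<sigma> = Star"
  unfolding star_of_def ..

lemma sigma_col: "\<forall>b\<in>boxes lam. snd (\<sigma> b) = snd b"
  using col_perm unfolding col_perms_def by blast

lemma Star_in_IDrep_sum_list: "Star \<in> IDrep (sum_list lam) lam"
  using Star_in_IDrep[OF sigma_col refl] card_boxes by simp

lemma one_white_map_Star: "one_white_map Star lam"
  unfolding one_white_map_def decorated_map_def one_white_map_axioms_def
  using is_map_Star is_bipartite_Star is_rooted_Star is_decorated_Star[OF sigma_col refl] rooted_dec_Star
    card_edges_Star nwhite_Star ncc_Star by simp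

sublocale s: one_white_map Star lam
  by (rule one_white_map_Star)

lemma rot_flag: "b \<in> boxes lam \<Longrightarrow> s.rot (flag b 0) = flag (\<sigma> b) 0"
  unfolding s.rot_def using Star_simps(5) Star_simps(10)[OF sigma_in_B] by simp

lemma rot_pow_flag:
  "b \<in> boxes lam \<Longrightarrow> (s.rot ^^ k) (flag b 0) = flag ((\<sigma> ^^ k) b) 0 \<and> (\<sigma> ^^ k) b \<in> boxes lam"
proof (induction k)
  case (Suc k)
  then show ?case using rot_flag sigma_in_B by simp
qed simp

lemma positive_flag:
  assumes b: "b \<in> boxes lam"
  shows "s.positive (flag b 0)"
proof -
  note c = cycle_min_facts[OF b]
  have fl: "flag b 0 \<in> flags Star" using flag_in_Star b by simp
  have r1: "flag (cycle_min b) 0 \<in> root Star" using flag_in_root[OF c(2) c(4)[symmetric]] .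
  have "comp Star (flag b 0) = star_flags b" using comp_Star(2)[OF b] by simp
  then have r2: "flag (cycle_min b) 0 \<in> comp Star (flag b 0)" using star_flags_mem[OF c(1)] by simp
  have root: "s.root_of (flag b 0) = flag (cycle_min b) 0" using s.root_of_facts(6)[OF fl r1 r2] by simp
  have p: "permutation \<sigma>" using perm finB permutation_permutes by blast
  have "b \<in> orbit \<sigma> (cycle_min b)" using c(3) sigma_orbit(1)[OF b] by simp
  then have "b \<in> {(\<sigma> ^^ n) (cycle_min b) | n. True}" using orbit_altdef_permutation[OF p] by simp
  then obtain k where "b = (\<sigma> ^^ k) (cycle_min b)" by blast
  then have "(\<sigma> ^^ k) (cycle_min b) = b" by (rule sym)
  then have "flag b 0 = (s.rot ^^ k) (flag (cycle_min b) 0)" using rot_pow_flag[OF c(2), of k] by simp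
  then show ?thesis unfolding s.positive_def s.rot_orbit_def root by blast
qed

lemma box_perm_Star: "s.box_perm = \<sigma>"
proof
  fix b
  show "s.box_perm b = \<sigma> b"
  proof (cases "b \<in> boxes lam")
    case True
    have "flag b 0 \<in> s.white_flags" using flag_in_Star Star_simps(13)[OF True, of 0] True s.white_flags_iff by simp
    then have "s.pos_flag b = flag b 0"
      using s.pos_flag_dec[OF _ positive_flag[OF True]] Star_simps(14)[OF True, of 0] by simp
    then show ?thesis unfolding s.box_perm_def using True rot_pow_flag[OF True, of 1] Star_simps(14)[OF sigma_in_B[OF True], of 0]
      by simp
  next
    case False
    then show ?thesis unfolding s.box_perm_def using perm permutes_not_in by metis
  qed
qed

end

section \<open>\<open>F\<close> at \<open>\<alpha> = 0\<close> as a sum over column-preserving permutations\<close>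

definition perm_weight :: "nat list \<Rightarrow> (nat \<Rightarrow> int) \<Rightarrow> (nat \<times> nat \<Rightarrow> nat \<times> nat) \<Rightarrow> int" where
  "perm_weight lam p \<sigma> = (-1) ^ (card (boxes lam) - card (star_construction.cycle_mins (boxes lam) \<sigma>)) *
      (\<Prod>b\<in>star_construction.cycle_mins (boxes lam) \<sigma>. p (card (orbit \<sigma> b)))"

definition F0_summand :: "nat list \<Rightarrow> (dmap \<Rightarrow> nat) \<Rightarrow> (nat \<Rightarrow> int) \<Rightarrow> dmap \<Rightarrow> int" where
  "F0_summand lam th p M = (-1) ^ (sum_list lam - nwhite M) * 0 ^ (nwhite M - ncc M) * (0 - 1) ^ th M * ptype p M"

abbreviation class_rep :: "dmap set \<Rightarrow> dmap" where
  "class_rep C \<equiv> SOME M. M \<in> C"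

lemma Fa_0_eq: "Fa 0 lam th p = (\<Sum>C\<in>ID (sum_list lam) lam. F0_summand lam th p (class_rep C))"
  unfolding Fa_def F0_summand_def Let_def by simp

lemma decorated_map_IDrep: "M \<in> IDrep (sum_list lam) lam \<Longrightarrow> decorated_map M lam"
  unfolding IDrep_def decorated_map_def using card_boxes by simp

abbreviation iso_rel :: "nat list \<Rightarrow> (dmap \<times> dmap) set" where
  "iso_rel lam \<equiv> {(M, N). M \<in> IDrep (sum_list lam) lam \<and> N \<in> IDrep (sum_list lam) lam \<and> iso M N}"

lemma equiv_iso_rel: "equiv (IDrep (sum_list lam) lam) (iso_rel lam)"
proof (rule equivI)
  show "refl_on (IDrep (sum_list lam) lam) (iso_rel lam)" unfolding refl_on_def using iso_refl by auto
  show "sym (iso_rel lam)" unfolding sym_def using iso_sym IDrep_def by auto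
  show "trans (iso_rel lam)" unfolding trans_def using iso_trans by auto
qed auto

lemma F0_summand_iso:
  assumes th: "nonorient_stat th" and M: "M \<in> IDrep (sum_list lam) lam" and i: "iso M N"
  shows "F0_summand lam th p N = F0_summand lam th p M"
proof -
  have mp: "is_map M" using M IDrep_def by simp
  obtain \<phi> where \<phi>: "iso_by \<phi> M N" using i iso_iff by blast
  have "th M = th N" using th mp i unfolding nonorient_stat_def by blast
  then show ?thesis
    unfolding F0_summand_def using nwhite_iso_by[OF \<phi> mp] ncc_iso_by[OF \<phi> mp] ptype_iso_by[OF \<phi> mp]
    by simp
qed

lemma F0_summand_eq_0:
  assumes M: "M \<in> IDrep (sum_list lam) lam" and "nwhite M \<noteq> ncc M"
  shows "F0_summand lam th p M = 0"
proof -
  have "ncc M \<le> nwhite M" using decorated_map.ncc_le_nwhite[OF decorated_map_IDrep[OF M]] .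
  then have "nwhite M - ncc M > 0" using assms(2) by simp
  then show ?thesis unfolding F0_summand_def by simp
qed

lemma star_of_in_IDrep:
  assumes "\<sigma> \<in> col_perms lam"
  shows "star_of lam \<sigma> \<in> IDrep (sum_list lam) lam"
proof -
  interpret col_star lam \<sigma> by (rule col_star.intro[OF assms])
  show ?thesis unfolding star_of_eq by (rule Star_in_IDrep_sum_list)
qed

lemma one_white_map_star_of:
  assumes "\<sigma> \<in> col_perms lam"
  shows "one_white_map (star_of lam \<sigma>) lam"
proof -
  interpret col_star lam \<sigma> by (rule col_star.intro[OF assms])
  show ?thesis unfolding star_of_eq by (rule one_white_map_Star)
qed

lemma box_perm_star_of:
  assumes "\<sigma> \<in> col_perms lam"
  shows "one_white_map.box_perm (star_of lam \<sigma>) lam = \<sigma>"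
proof -
  interpret col_star lam \<sigma> by (rule col_star.intro[OF assms])
  show ?thesis unfolding star_of_eq by (rule box_perm_Star)
qed

lemma F0_summand_star_of:
  assumes th: "nonorient_stat th" and s: "\<sigma> \<in> col_perms lam"
  shows "F0_summand lam th p (star_of lam \<sigma>) = perm_weight lam p \<sigma>"
proof -
  interpret col_star lam \<sigma> by (rule col_star.intro[OF s])
  have "th Star = 0" using th is_map_Star orientable_Star unfolding nonorient_stat_def by blast
  then show ?thesis unfolding F0_summand_def perm_weight_def star_of_eq
    using nwhite_Star ncc_Star ptype_Star card_boxes by simp
qed

lemma box_perm_in_col_perms: "one_white_map M lam \<Longrightarrow> one_white_map.box_perm M lam \<in> col_perms lam"
  unfolding col_perms_def using one_white_map.box_perm_permutes one_white_map.box_perm_col by blast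

lemma iso_star_of_box_perm: "one_white_map M lam \<Longrightarrow> iso M (star_of lam (one_white_map.box_perm M lam))"
  unfolding star_of_def iso_iff using one_white_map.iso_by_to_star by blast

text \<open>\<open>IDrep n lam\<close> is infinite, as the fields of a \<open>dmap\<close> are arbitrary outside the flags;
  but the restrictions to the flags take only finitely many values, and maps with equal
  restrictions are isomorphic via the identity.\<close>

definition map_key :: "nat list \<Rightarrow> dmap \<Rightarrow>
    (nat \<Rightarrow> nat) \<times> (nat \<Rightarrow> nat) \<times> (nat \<Rightarrow> nat) \<times> (nat \<Rightarrow> bool) \<times> nat set \<times> (nat \<Rightarrow> nat \<times> nat)" where
  "map_key lam M = (let D = {0..<4 * sum_list lam} in
     (restrict (a0 M) D, restrict (a1 M) D, restrict (a2 M) D, restrict (white M) D, root M, restrict (dec M) D))"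

lemma finite_map_keys: "finite (map_key lam ` IDrep (sum_list lam) lam)"
proof -
  let ?D = "{0..<4 * sum_list lam}"
  let ?K = "(?D \<rightarrow>\<^sub>E ?D) \<times> (?D \<rightarrow>\<^sub>E ?D) \<times> (?D \<rightarrow>\<^sub>E ?D) \<times> (?D \<rightarrow>\<^sub>E (UNIV :: bool set)) \<times> Pow ?D \<times> (?D \<rightarrow>\<^sub>E boxes lam)"
  have f1: "finite (?D \<rightarrow>\<^sub>E ?D)" by (rule finite_PiE) auto
  have f2: "finite (?D \<rightarrow>\<^sub>E (UNIV :: bool set))" by (rule finite_PiE) auto
  have f3: "finite (?D \<rightarrow>\<^sub>E boxes lam)" by (rule finite_PiE) (auto simp: finite_boxes)
  have f4: "finite (Pow ?D)" by simp
  have fK: "finite ?K"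
    by (rule finite_cartesian_product[OF f1 finite_cartesian_product[OF f1 finite_cartesian_product[OF f1
          finite_cartesian_product[OF f2 finite_cartesian_product[OF f4 f3]]]]])
  have keys_subset: "map_key lam ` IDrep (sum_list lam) lam \<subseteq> ?K"
  proof
    fix k assume "k \<in> map_key lam ` IDrep (sum_list lam) lam"
    then obtain M where M: "M \<in> IDrep (sum_list lam) lam" "k = map_key lam M" by blast
    have fl: "flags M = ?D" and mp: "is_map M" and rooted: "is_rooted M" and dc: "is_decorated lam M"
      using M unfolding IDrep_def by auto
    have "\<forall>x\<in>?D. a0 M x \<in> ?D \<and> a1 M x \<in> ?D \<and> a2 M x \<in> ?D"
    proof
      fix x assume "x \<in> ?D"
      then have "x \<in> flags M" using fl by simp
      then show "a0 M x \<in> ?D \<and> a1 M x \<in> ?D \<and> a2 M x \<in> ?D" using is_mapD(1-3)[OF mp] fl by simp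
    qed
    moreover have "root M \<subseteq> ?D" using rooted fl unfolding is_rooted_def by simp
    moreover have "\<forall>x\<in>?D. dec M x \<in> boxes lam" using dc fl unfolding is_decorated_def by simp
    ultimately show "k \<in> ?K" unfolding M(2) map_key_def Let_def by auto
  qed
  show ?thesis by (rule finite_subset[OF keys_subset fK])
qed

lemma iso_if_map_key_eq:
  assumes M: "M \<in> IDrep (sum_list lam) lam" and N: "N \<in> IDrep (sum_list lam) lam" and k: "map_key lam M = map_key lam N"
  shows "iso M N"
proof -
  let ?D = "{0..<4 * sum_list lam}"
  have fl: "flags M = ?D" "flags N = ?D" using M N unfolding IDrep_def by auto
  have e: "restrict (a0 M) ?D = restrict (a0 N) ?D" "restrict (a1 M) ?D = restrict (a1 N) ?D"
    "restrict (a2 M) ?D = restrict (a2 N) ?D" "restrict (white M) ?D = restrict (white N) ?D"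
    "root M = root N" "restrict (dec M) ?D = restrict (dec N) ?D"
    using k unfolding map_key_def Let_def by auto
  have "\<And>x. x \<in> ?D \<Longrightarrow> a0 M x = a0 N x \<and> a1 M x = a1 N x \<and> a2 M x = a2 N x \<and> white M x = white N x \<and> dec M x = dec N x"
    using e by (metis restrict_apply')
  then have "iso_by id M N" unfolding iso_by_def using fl e(5) by (auto simp: bij_betw_def)
  then show ?thesis using iso_iff by blast
qed

lemma finite_iso_classes: "finite (IDrep (sum_list lam) lam // iso_rel lam)"
proof -
  let ?I = "IDrep (sum_list lam) lam"
  let ?rk = "\<lambda>k. iso_rel lam `` {SOME M. M \<in> ?I \<and> map_key lam M = k}"
  have classes_subset: "?I // iso_rel lam \<subseteq> ?rk ` (map_key lam ` ?I)"
  proof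
    fix C assume "C \<in> ?I // iso_rel lam"
    then obtain M where M: "M \<in> ?I" "C = iso_rel lam `` {M}" by (auto elim: quotientE)
    let ?M' = "SOME M'. M' \<in> ?I \<and> map_key lam M' = map_key lam M"
    have M': "?M' \<in> ?I \<and> map_key lam ?M' = map_key lam M" by (rule someI[of _ M]) (use M in simp)
    then have "(?M', M) \<in> iso_rel lam" using iso_if_map_key_eq M by auto
    then have "iso_rel lam `` {?M'} = iso_rel lam `` {M}" using equiv_class_eq[OF equiv_iso_rel] by blast
    then show "C \<in> ?rk ` (map_key lam ` ?I)" using M by blast
  qed
  show ?thesis by (rule finite_subset[OF classes_subset finite_imageI[OF finite_map_keys]])
qed

definition star_class :: "nat list \<Rightarrow> (nat \<times> nat \<Rightarrow> nat \<times> nat) \<Rightarrow> dmap set" where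
  "star_class lam \<sigma> = iso_rel lam `` {star_of lam \<sigma>}"

lemma class_rep:
  assumes "C \<in> ID (sum_list lam) lam"
  shows "class_rep C \<in> C" "class_rep C \<in> IDrep (sum_list lam) lam" "C = iso_rel lam `` {class_rep C}"
proof -
  obtain M where M: "M \<in> IDrep (sum_list lam) lam" "C = iso_rel lam `` {M}"
    using assms unfolding ID_def by (auto elim: quotientE)
  then have "M \<in> C" using equiv_class_self[OF equiv_iso_rel] by blast
  then show rep: "class_rep C \<in> C" by (rule someI)
  then have M_rep: "(M, class_rep C) \<in> iso_rel lam" using M by blast
  then show "class_rep C \<in> IDrep (sum_list lam) lam" by blast
  have "iso_rel lam `` {M} = iso_rel lam `` {class_rep C}"
    using M_rep by (rule equiv_class_eq[OF equiv_iso_rel])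
  with M(2) show "C = iso_rel lam `` {class_rep C}" by (rule trans)
qed

lemma Fa_0_eq_sum_one_white_classes:
  "Fa 0 lam th p = (\<Sum>C\<in>{C \<in> ID (sum_list lam) lam. nwhite (class_rep C) = ncc (class_rep C)}.
     F0_summand lam th p (class_rep C))"
  unfolding Fa_0_eq
  by (rule sum.mono_neutral_right)
    (use finite_iso_classes class_rep F0_summand_eq_0 in \<open>auto simp: ID_def\<close>)

lemma star_class_in_ID: "\<sigma> \<in> col_perms lam \<Longrightarrow> star_class lam \<sigma> \<in> ID (sum_list lam) lam"
  unfolding star_class_def ID_def using star_of_in_IDrep by (rule quotientI)

lemma iso_class_rep_star_class:
  "\<sigma> \<in> col_perms lam \<Longrightarrow> iso (star_of lam \<sigma>) (class_rep (star_class lam \<sigma>))"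
  using class_rep(1)[OF star_class_in_ID] unfolding star_class_def by blast

lemma F0_summand_star_class:
  assumes "nonorient_stat th" "\<sigma> \<in> col_perms lam"
  shows "F0_summand lam th p (class_rep (star_class lam \<sigma>)) = perm_weight lam p \<sigma>"
  using F0_summand_iso[OF assms(1) star_of_in_IDrep iso_class_rep_star_class] F0_summand_star_of[OF assms]
    assms(2) by simp

lemma inj_on_star_class: "inj_on (star_class lam) (col_perms lam)"
proof (rule inj_onI)
  fix \<sigma> \<tau> assume s: "\<sigma> \<in> col_perms lam" "\<tau> \<in> col_perms lam" "star_class lam \<sigma> = star_class lam \<tau>"
  then have "(star_of lam \<sigma>, star_of lam \<tau>) \<in> iso_rel lam"
    using eq_equiv_class[OF _ equiv_iso_rel] star_of_in_IDrep unfolding star_class_def by blast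
  then obtain \<psi> where "iso_by \<psi> (star_of lam \<sigma>) (star_of lam \<tau>)" using iso_iff by blast
  then have "one_white_map.box_perm (star_of lam \<sigma>) lam = one_white_map.box_perm (star_of lam \<tau>) lam"
    by (rule box_perm_iso_by[OF one_white_map_star_of[OF s(1)] one_white_map_star_of[OF s(2)]])
  then show "\<sigma> = \<tau>" using box_perm_star_of s by simp
qed

lemma star_class_one_white:
  assumes s: "\<sigma> \<in> col_perms lam"
  shows "nwhite (class_rep (star_class lam \<sigma>)) = ncc (class_rep (star_class lam \<sigma>))"
proof -
  obtain \<phi> where \<phi>: "iso_by \<phi> (star_of lam \<sigma>) (class_rep (star_class lam \<sigma>))"
    using iso_class_rep_star_class[OF s] iso_iff by blast
  have mp: "is_map (star_of lam \<sigma>)" using star_of_in_IDrep[OF s] IDrep_def by simp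
  show ?thesis
    using one_white_map.one_white[OF one_white_map_star_of[OF s]] nwhite_iso_by[OF \<phi> mp] ncc_iso_by[OF \<phi> mp]
    by simp
qed

lemma one_white_class_is_star_class:
  assumes C: "C \<in> ID (sum_list lam) lam" "nwhite (class_rep C) = ncc (class_rep C)"
  obtains \<sigma> where "\<sigma> \<in> col_perms lam" "C = star_class lam \<sigma>"
proof -
  let ?M = "class_rep C"
  note r = class_rep[OF C(1)]
  have M: "one_white_map ?M lam"
    using decorated_map_IDrep[OF r(2)] C(2) unfolding one_white_map_def one_white_map_axioms_def by auto
  let ?\<sigma> = "one_white_map.box_perm ?M lam"
  have s: "?\<sigma> \<in> col_perms lam" using box_perm_in_col_perms[OF M] .
  have "(?M, star_of lam ?\<sigma>) \<in> iso_rel lam"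
    using r(2) star_of_in_IDrep[OF s] iso_star_of_box_perm[OF M] by blast
  then have "iso_rel lam `` {?M} = star_class lam ?\<sigma>"
    unfolding star_class_def by (rule equiv_class_eq[OF equiv_iso_rel])
  with r(3) have "C = star_class lam ?\<sigma>" by (rule trans)
  then show ?thesis using that s by blast
qed

lemma bij_betw_star_class:
  "bij_betw (star_class lam) (col_perms lam)
     {C \<in> ID (sum_list lam) lam. nwhite (class_rep C) = ncc (class_rep C)}"
proof (rule bij_betw_imageI[OF inj_on_star_class])
  show "star_class lam ` col_perms lam = {C \<in> ID (sum_list lam) lam. nwhite (class_rep C) = ncc (class_rep C)}"
  proof (intro set_eqI iffI)
    fix C assume "C \<in> {C \<in> ID (sum_list lam) lam. nwhite (class_rep C) = ncc (class_rep C)}"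
    then have "C \<in> ID (sum_list lam) lam" "nwhite (class_rep C) = ncc (class_rep C)" by auto
    then obtain \<sigma> where "\<sigma> \<in> col_perms lam" "C = star_class lam \<sigma>"
      by (rule one_white_class_is_star_class)
    then show "C \<in> star_class lam ` col_perms lam" by blast
  qed (use star_class_in_ID star_class_one_white in auto)
qed

theorem Fa_0_eq_sum_col_perms:
  assumes "nonorient_stat th"
  shows "Fa 0 lam th p = (\<Sum>\<sigma>\<in>col_perms lam. perm_weight lam p \<sigma>)"
proof -
  have "Fa 0 lam th p = (\<Sum>\<sigma>\<in>col_perms lam. F0_summand lam th p (class_rep (star_class lam \<sigma>)))"
    unfolding Fa_0_eq_sum_one_white_classes by (rule sum.reindex_bij_betw[OF bij_betw_star_class, symmetric])
  also have "\<dots> = (\<Sum>\<sigma>\<in>col_perms lam. perm_weight lam p \<sigma>)"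
    using F0_summand_star_class[OF assms] by simp
  finally show ?thesis .
qed

section \<open>Factorisation over the columns\<close>

lemma less_length_filter_ge_iff:
  fixes lam :: "nat list"
  assumes "sorted_wrt (\<ge>) lam"
  shows "i < length (filter (\<lambda>l. j \<le> l) lam) \<longleftrightarrow> i < length lam \<and> j \<le> lam ! i"
  using assms
proof (induction lam arbitrary: i)
  case Nil then show ?case by simp
next
  case (Cons a rest)
  show ?case
  proof (cases "j \<le> a")
    case True
    then show ?thesis using Cons by (cases i) auto
  next
    case False
    have "\<forall>x\<in>set rest. x \<le> a" using Cons(2) by simp
    then have "\<forall>x\<in>set rest. \<not> j \<le> x" using False by (auto dest: le_trans)
    then have "filter (\<lambda>l. j \<le> l) rest = []" by (simp add: filter_empty_conv)
    moreover have "\<And>k. k < length (a # rest) \<Longrightarrow> (a # rest) ! k \<le> a"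
      using Cons(2) by (auto simp: nth_Cons split: nat.splits)
    ultimately show ?thesis using False by (auto dest: le_trans)
  qed
qed

lemma is_partition_sorted: "is_partition lam \<Longrightarrow> sorted_wrt (\<ge>) lam"
  unfolding is_partition_def by (simp add: sorted_wrt_rev)

lemma boxes_by_columns:
  assumes p: "is_partition lam"
  shows "boxes lam = (\<lambda>(j, i). (i, j)) ` Sigma {1..ncols lam} (\<lambda>j. {1..conj_part lam j})"
proof -
  have s: "sorted_wrt (\<ge>) lam" using is_partition_sorted[OF p] .
  have ci: "\<And>i j. i \<ge> 1 \<Longrightarrow> i \<le> conj_part lam j \<longleftrightarrow> i \<le> length lam \<and> j \<le> lam ! (i - 1)"
  proof -
    fix i j :: nat assume i: "i \<ge> 1"
    have "i \<le> conj_part lam j \<longleftrightarrow> i - 1 < conj_part lam j" using i by linarith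
    also have "\<dots> \<longleftrightarrow> i - 1 < length lam \<and> j \<le> lam ! (i - 1)" unfolding conj_part_def by (rule less_length_filter_ge_iff[OF s])
    also have "\<dots> \<longleftrightarrow> i \<le> length lam \<and> j \<le> lam ! (i - 1)" using i by linarith
    finally show "i \<le> conj_part lam j \<longleftrightarrow> i \<le> length lam \<and> j \<le> lam ! (i - 1)" .
  qed
  have hd: "\<And>i. i < length lam \<Longrightarrow> lam ! i \<le> ncols lam"
    using s unfolding ncols_def by (cases lam) (auto simp: nth_Cons split: nat.splits)
  show ?thesis
  proof (intro set_eqI iffI)
    fix b assume "b \<in> boxes lam"
    then obtain i j where b: "b = (i, j)" "1 \<le> i" "i \<le> length lam" "1 \<le> j" "j \<le> lam ! (i - 1)"
      unfolding boxes_def by auto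
    have "i - 1 < length lam" using b by linarith
    then have "j \<le> ncols lam" using hd[of "i - 1"] b by simp
    moreover have "i \<le> conj_part lam j" using ci b by simp
    ultimately show "b \<in> (\<lambda>(j, i). (i, j)) ` Sigma {1..ncols lam} (\<lambda>j. {1..conj_part lam j})"
      using b by (auto intro: image_eqI[of _ _ "(j, i)"])
  next
    fix b assume "b \<in> (\<lambda>(j, i). (i, j)) ` Sigma {1..ncols lam} (\<lambda>j. {1..conj_part lam j})"
    then obtain i j where b: "b = (i, j)" "1 \<le> j" "1 \<le> i" "i \<le> conj_part lam j" by auto
    then show "b \<in> boxes lam" unfolding boxes_def using ci by auto
  qed
qed

text \<open>Each cycle of \<open>\<sigma>\<close> contributes \<open>p\<close> of its length at its least box and \<open>-1\<close> at each
  of its other boxes; this spreads the weight of \<open>\<sigma>\<close> over the boxes, so that it factors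
  over the columns.\<close>

definition box_weight :: "(nat \<Rightarrow> int) \<Rightarrow> (nat \<times> nat \<Rightarrow> nat \<times> nat) \<Rightarrow> nat \<times> nat \<Rightarrow> int" where
  "box_weight p \<sigma> b = (if b = Min (orbit \<sigma> b) then p (card (orbit \<sigma> b)) else -1)"

lemma perm_weight_eq_prod:
  assumes s: "\<sigma> \<in> col_perms lam"
  shows "perm_weight lam p \<sigma> = (\<Prod>b\<in>boxes lam. box_weight p \<sigma> b)"
proof -
  interpret col_star lam \<sigma> by (rule col_star.intro[OF s])
  have RB: "cycle_mins \<subseteq> boxes lam" using cycle_mins_subset .
  have fR: "finite cycle_mins" using finB RB finite_subset by blast
  have "(\<Prod>b\<in>boxes lam. box_weight p \<sigma> b) = (\<Prod>b\<in>boxes lam - cycle_mins. box_weight p \<sigma> b) * (\<Prod>b\<in>cycle_mins. box_weight p \<sigma> b)"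
    by (rule prod.subset_diff[OF RB finB])
  also have "(\<Prod>b\<in>boxes lam - cycle_mins. box_weight p \<sigma> b) = (\<Prod>b\<in>boxes lam - cycle_mins. -1)"
    by (rule prod.cong) (auto simp: box_weight_def cycle_mins_def cycle_min_def)
  also have "\<dots> = (-1) ^ (card (boxes lam) - card cycle_mins)" using card_Diff_subset[OF fR RB] by simp
  also have "(\<Prod>b\<in>cycle_mins. box_weight p \<sigma> b) = (\<Prod>b\<in>cycle_mins. p (card (orbit \<sigma> b)))"
    by (rule prod.cong) (auto simp: box_weight_def cycle_mins_def cycle_min_def)
  finally show ?thesis unfolding perm_weight_def by simp
qed

definition col_boxes :: "nat \<Rightarrow> (nat \<times> nat) set" where "col_boxes m = (\<lambda>i. (i, 1)) ` {1..m}"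

lemma boxes_col: "boxes (replicate m 1) = col_boxes m"
  unfolding boxes_def col_boxes_def by auto

lemma col_perms_col: "col_perms (replicate m 1) = {\<tau>. \<tau> permutes col_boxes m}"
  unfolding col_perms_def boxes_col
proof (intro Collect_cong iffI conjI)
  fix \<tau> assume "\<tau> permutes col_boxes m"
  show "\<forall>b\<in>col_boxes m. snd (\<tau> b) = snd b"
  proof
    fix b assume b: "b \<in> col_boxes m"
    then have "\<tau> b \<in> col_boxes m" using permutes_in_image[OF \<open>\<tau> permutes col_boxes m\<close>] by simp
    then show "snd (\<tau> b) = snd b" using b by (auto simp: col_boxes_def)
  qed
qed auto

text \<open>Column \<open>j\<close> of \<open>\<lambda>\<close> is identified with the one-column diagram \<open>1^(\<lambda>'_j)\<close> via
  \<open>(i, 1) \<mapsto> (i, j)\<close>; \<open>glue\<close> and \<open>restrict_col\<close> are the resulting mutually inverse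
  maps between column-preserving permutations of \<open>\<lambda>\<close> and families of permutations of the
  columns.\<close>

definition to_col :: "nat \<Rightarrow> nat \<times> nat \<Rightarrow> nat \<times> nat" where "to_col j x = (fst x, j)"

definition glue :: "nat list \<Rightarrow> (nat \<Rightarrow> nat \<times> nat \<Rightarrow> nat \<times> nat) \<Rightarrow> nat \<times> nat \<Rightarrow> nat \<times> nat" where
  "glue lam g b = (if b \<in> boxes lam then (fst (g (snd b) (fst b, 1)), snd b) else b)"

definition restrict_col :: "nat list \<Rightarrow> (nat \<times> nat \<Rightarrow> nat \<times> nat) \<Rightarrow> nat \<Rightarrow> nat \<times> nat \<Rightarrow> nat \<times> nat" where
  "restrict_col lam \<sigma> j x = (if x \<in> col_boxes (conj_part lam j) then (fst (\<sigma> (fst x, j)), 1) else x)"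

abbreviation cols :: "nat list \<Rightarrow> nat set" where "cols lam \<equiv> {1..ncols lam}"
abbreviation col_perm_set :: "nat list \<Rightarrow> nat \<Rightarrow> (nat \<times> nat \<Rightarrow> nat \<times> nat) set" where
  "col_perm_set lam j \<equiv> col_perms (replicate (conj_part lam j) 1)"

lemma mem_boxes_iff:
  assumes p: "is_partition lam"
  shows "(i, j) \<in> boxes lam \<longleftrightarrow> j \<in> cols lam \<and> (i, 1) \<in> col_boxes (conj_part lam j)"
  unfolding boxes_by_columns[OF p] col_boxes_def by auto

lemma to_col_in_boxes:
  assumes p: "is_partition lam" and j: "j \<in> cols lam" and x: "x \<in> col_boxes (conj_part lam j)"
  shows "(fst x, j) \<in> boxes lam"
proof -
  have "(fst x, 1) \<in> col_boxes (conj_part lam j)" using x by (auto simp: col_boxes_def)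
  then show ?thesis using mem_boxes_iff[OF p] j by simp
qed

lemma col_boxes_fst: "x \<in> col_boxes m \<Longrightarrow> (fst x, 1) = x" unfolding col_boxes_def by auto
lemma finite_col_boxes: "finite (col_boxes m)" unfolding col_boxes_def by simp

lemma glue_to_col:
  assumes p: "is_partition lam" and j: "j \<in> cols lam" and x: "x \<in> col_boxes (conj_part lam j)"
    and g: "g j permutes col_boxes (conj_part lam j)"
  shows "glue lam g (to_col j x) = to_col j (g j x)" "to_col j x \<in> boxes lam"
proof -
  have xb: "to_col j x \<in> boxes lam" unfolding to_col_def using to_col_in_boxes[OF p j x] .
  show "to_col j x \<in> boxes lam" by (rule xb)
  have "(fst x, 1) = x" using col_boxes_fst[OF x] .
  then show "glue lam g (to_col j x) = to_col j (g j x)" unfolding glue_def to_col_def using xb by (simp add: to_col_def)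
qed

lemma glue_in_col_perms:
  assumes p: "is_partition lam" and g: "g \<in> PiE (cols lam) (col_perm_set lam)"
  shows "glue lam g \<in> col_perms lam"
proof -
  have gp: "\<And>j. j \<in> cols lam \<Longrightarrow> g j permutes col_boxes (conj_part lam j)"
    using g col_perms_col by (auto simp: PiE_iff)
  have into: "\<And>b. b \<in> boxes lam \<Longrightarrow> glue lam g b \<in> boxes lam \<and> snd (glue lam g b) = snd b"
  proof -
    fix b assume b: "b \<in> boxes lam"
    obtain i j where ij: "b = (i, j)" by fastforce
    have j: "j \<in> cols lam" and x: "(i, 1) \<in> col_boxes (conj_part lam j)" using mem_boxes_iff[OF p] b ij by auto
    have y: "g j (i, 1) \<in> col_boxes (conj_part lam j)" using permutes_in_image[OF gp[OF j]] x by simp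
    have "(fst (g j (i, 1)), j) \<in> boxes lam" using to_col_in_boxes[OF p j y] .
    then show "glue lam g b \<in> boxes lam \<and> snd (glue lam g b) = snd b" unfolding glue_def using b ij by simp
  qed
  have inj: "inj_on (glue lam g) (boxes lam)"
  proof (rule inj_onI)
    fix b c assume b: "b \<in> boxes lam" and c: "c \<in> boxes lam" and e: "glue lam g b = glue lam g c"
    obtain i j where ij: "b = (i, j)" by fastforce
    obtain i' j' where ij': "c = (i', j')" by fastforce
    have jj: "j = j'" using e into b c ij ij' by (metis snd_conv)
    have j: "j \<in> cols lam" and x: "(i, 1) \<in> col_boxes (conj_part lam j)" using mem_boxes_iff[OF p] b ij by auto
    have x': "(i', 1) \<in> col_boxes (conj_part lam j)" using mem_boxes_iff[OF p] c ij' jj by auto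
    have y: "g j (i, 1) \<in> col_boxes (conj_part lam j)" "g j (i', 1) \<in> col_boxes (conj_part lam j)"
      using permutes_in_image[OF gp[OF j]] x x' by simp_all
    have "fst (g j (i, 1)) = fst (g j (i', 1))" using e b c ij ij' jj unfolding glue_def by simp
    then have "g j (i, 1) = g j (i', 1)" using col_boxes_fst y by metis
    then have "(i, 1) = (i', 1)" using permutes_inj[OF gp[OF j]] unfolding inj_def by blast
    then show "b = c" using ij ij' jj by simp
  qed
  have "glue lam g ` boxes lam = boxes lam" using endo_inj_surj[OF finite_boxes _ inj] into by blast
  then have "glue lam g permutes boxes lam"
    using inj by (intro bij_imp_permutes) (auto simp: bij_betw_def glue_def)
  then show ?thesis unfolding col_perms_def using into by blast
qed

lemma restrict_col_in_col_perm_set: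
  assumes p: "is_partition lam" and s: "\<sigma> \<in> col_perms lam" and j: "j \<in> cols lam"
  shows "restrict_col lam \<sigma> j \<in> col_perm_set lam j"
proof -
  have sp: "\<sigma> permutes boxes lam" and sc: "\<forall>b\<in>boxes lam. snd (\<sigma> b) = snd b" using s col_perms_def by auto
  let ?m = "conj_part lam j"
  have into: "\<And>x. x \<in> col_boxes ?m \<Longrightarrow> restrict_col lam \<sigma> j x \<in> col_boxes ?m"
  proof -
    fix x assume x: "x \<in> col_boxes ?m"
    have b: "(fst x, j) \<in> boxes lam" using to_col_in_boxes[OF p j x] .
    have sb: "\<sigma> (fst x, j) \<in> boxes lam" "snd (\<sigma> (fst x, j)) = j" using permutes_in_image[OF sp] b sc by auto
    have "(fst (\<sigma> (fst x, j)), j) \<in> boxes lam" using sb by (metis prod.collapse)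
    then show "restrict_col lam \<sigma> j x \<in> col_boxes ?m" unfolding restrict_col_def using x mem_boxes_iff[OF p] by simp
  qed
  have inj: "inj_on (restrict_col lam \<sigma> j) (col_boxes ?m)"
  proof (rule inj_onI)
    fix x y assume x: "x \<in> col_boxes ?m" and y: "y \<in> col_boxes ?m" and e: "restrict_col lam \<sigma> j x = restrict_col lam \<sigma> j y"
    have b: "(fst x, j) \<in> boxes lam" "(fst y, j) \<in> boxes lam" using to_col_in_boxes[OF p j x] to_col_in_boxes[OF p j y] by auto
    have "fst (\<sigma> (fst x, j)) = fst (\<sigma> (fst y, j))" using e x y unfolding restrict_col_def by simp
    moreover have "snd (\<sigma> (fst x, j)) = snd (\<sigma> (fst y, j))" using sc b by simp
    ultimately have "\<sigma> (fst x, j) = \<sigma> (fst y, j)" by (simp add: prod_eq_iff)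
    then have "(fst x, j) = (fst y, j)" using sp permutes_inj by (metis injD)
    then show "x = y" using col_boxes_fst x y by (metis fst_conv)
  qed
  have "restrict_col lam \<sigma> j ` col_boxes ?m = col_boxes ?m" using endo_inj_surj[OF finite_col_boxes _ inj] into by blast
  then have "restrict_col lam \<sigma> j permutes col_boxes ?m"
    using inj by (intro bij_imp_permutes) (auto simp: bij_betw_def restrict_col_def)
  then show ?thesis using col_perms_col by simp
qed

lemma glue_restrict_col:
  assumes p: "is_partition lam" and s: "\<sigma> \<in> col_perms lam"
  shows "glue lam (\<lambda>j\<in>cols lam. restrict_col lam \<sigma> j) = \<sigma>"
proof
  fix b
  have sp: "\<sigma> permutes boxes lam" and sc: "\<forall>b\<in>boxes lam. snd (\<sigma> b) = snd b" using s col_perms_def by auto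
  show "glue lam (\<lambda>j\<in>cols lam. restrict_col lam \<sigma> j) b = \<sigma> b"
  proof (cases "b \<in> boxes lam")
    case True
    obtain i j where ij: "b = (i, j)" by fastforce
    have j: "j \<in> cols lam" and x: "(i, 1) \<in> col_boxes (conj_part lam j)" using mem_boxes_iff[OF p] True ij by auto
    have sj: "snd (\<sigma> (i, j)) = j" using sc True ij by simp
    have bi: "(i, j) \<in> boxes lam" using True ij by simp
    show ?thesis unfolding ij glue_def restrict_col_def using bi j x sj by (simp add: prod_eq_iff)
  next
    case False
    then show ?thesis unfolding glue_def using sp permutes_not_in by metis
  qed
qed

lemma restrict_col_glue:
  assumes p: "is_partition lam" and g: "g \<in> PiE (cols lam) (col_perm_set lam)"
  shows "(\<lambda>j\<in>cols lam. restrict_col lam (glue lam g) j) = g"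
proof
  fix j
  show "(\<lambda>j\<in>cols lam. restrict_col lam (glue lam g) j) j = g j"
  proof (cases "j \<in> cols lam")
    case False
    then show ?thesis using PiE_arb[OF g False] False by auto
  next
    case j: True
    have gp: "g j permutes col_boxes (conj_part lam j)" using g col_perms_col j by (auto simp: PiE_iff)
    show ?thesis
    proof
      fix x
      show "(\<lambda>j\<in>cols lam. restrict_col lam (glue lam g) j) j x = g j x"
      proof (cases "x \<in> col_boxes (conj_part lam j)")
        case True
        have "glue lam g (to_col j x) = to_col j (g j x)" using glue_to_col(1)[where g=g, OF p j True gp] by simp
        moreover have "g j x \<in> col_boxes (conj_part lam j)" using permutes_in_image[OF gp] True by simp
        ultimately show ?thesis unfolding restrict_col_def using j True col_boxes_fst by (simp add: to_col_def)
      next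
        case False
        then show ?thesis unfolding restrict_col_def using j gp permutes_not_in by fastforce
      qed
    qed
  qed
qed

lemma bij_betw_glue:
  assumes p: "is_partition lam"
  shows "bij_betw (glue lam) (PiE (cols lam) (col_perm_set lam)) (col_perms lam)"
proof (rule bij_betw_byWitness[where f'="\<lambda>\<sigma>. \<lambda>j\<in>cols lam. restrict_col lam \<sigma> j"])
  show "\<forall>g\<in>PiE (cols lam) (col_perm_set lam). (\<lambda>j\<in>cols lam. restrict_col lam (glue lam g) j) = g" using restrict_col_glue[OF p] by blast
  show "\<forall>\<sigma>\<in>col_perms lam. glue lam (\<lambda>j\<in>cols lam. restrict_col lam \<sigma> j) = \<sigma>" using glue_restrict_col[OF p] by blast
  show "glue lam ` PiE (cols lam) (col_perm_set lam) \<subseteq> col_perms lam" using glue_in_col_perms[OF p] by blast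
  show "(\<lambda>\<sigma>. \<lambda>j\<in>cols lam. restrict_col lam \<sigma> j) ` col_perms lam \<subseteq> PiE (cols lam) (col_perm_set lam)"
    using restrict_col_in_col_perm_set[OF p] by (auto simp: PiE_iff)
qed

lemma mono_to_col: "mono (to_col j)"
  unfolding mono_def to_col_def by (auto simp: less_eq_prod_def)

lemma glue_pow:
  assumes p: "is_partition lam" and g: "g \<in> PiE (cols lam) (col_perm_set lam)" and j: "j \<in> cols lam"
    and x: "x \<in> col_boxes (conj_part lam j)"
  shows "(glue lam g ^^ k) (to_col j x) = to_col j ((g j ^^ k) x) \<and> (g j ^^ k) x \<in> col_boxes (conj_part lam j)"
proof (induction k)
  case 0 then show ?case using x by simp
next
  case (Suc k)
  have gp: "g j permutes col_boxes (conj_part lam j)" using g col_perms_col j by (auto simp: PiE_iff)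
  have "glue lam g (to_col j ((g j ^^ k) x)) = to_col j (g j ((g j ^^ k) x))"
    using glue_to_col(1)[where g=g, OF p j _ gp] Suc by blast
  moreover have "g j ((g j ^^ k) x) \<in> col_boxes (conj_part lam j)" using permutes_in_image[OF gp] Suc by simp
  ultimately show ?case using Suc by simp
qed

lemma orbit_glue:
  assumes p: "is_partition lam" and g: "g \<in> PiE (cols lam) (col_perm_set lam)" and j: "j \<in> cols lam"
    and x: "x \<in> col_boxes (conj_part lam j)"
  shows "orbit (glue lam g) (to_col j x) = to_col j ` orbit (g j) x"
proof -
  have gp: "g j permutes col_boxes (conj_part lam j)" using g col_perms_col j by (auto simp: PiE_iff)
  have p1: "permutation (g j)" using gp finite_col_boxes permutation_permutes by blast
  have p2: "permutation (glue lam g)" using glue_in_col_perms[OF p g] finite_boxes permutation_permutes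
    unfolding col_perms_def by blast
  show ?thesis unfolding orbit_altdef_permutation[OF p1] orbit_altdef_permutation[OF p2]
    using glue_pow[OF p g j x] by auto
qed

lemma box_weight_glue:
  assumes p: "is_partition lam" and g: "g \<in> PiE (cols lam) (col_perm_set lam)" and j: "j \<in> cols lam"
    and x: "x \<in> col_boxes (conj_part lam j)"
  shows "box_weight q (glue lam g) (to_col j x) = box_weight q (g j) x"
proof -
  have gp: "g j permutes col_boxes (conj_part lam j)" using g col_perms_col j by (auto simp: PiE_iff)
  let ?O = "orbit (g j) x"
  have Osub: "?O \<subseteq> col_boxes (conj_part lam j)" using permutes_orbit_subset[OF gp x] .
  have fO: "finite ?O" using Osub finite_col_boxes finite_subset by blast
  have p1: "permutation (g j)" using gp finite_col_boxes permutation_permutes by blast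
  have xO: "x \<in> ?O" using permutation_self_in_orbit[OF p1] .
  have inj: "inj_on (to_col j) (col_boxes (conj_part lam j))"
    unfolding to_col_def by (rule inj_onI) (metis col_boxes_fst fst_conv)
  have injO: "inj_on (to_col j) ?O" using inj_on_subset[OF inj Osub] .
  have card: "card (to_col j ` ?O) = card ?O" using card_image[OF injO] .
  have ne: "?O \<noteq> {}" using xO by blast
  have cycle_min: "Min (to_col j ` ?O) = to_col j (Min ?O)" using mono_Min_commute[OF mono_to_col fO ne] by simp
  have mO: "Min ?O \<in> ?O" using Min_in[OF fO] xO by auto
  have xc: "x \<in> col_boxes (conj_part lam j)" using x .
  have mc: "Min ?O \<in> col_boxes (conj_part lam j)" using mO Osub by blast
  have eq: "to_col j x = to_col j (Min ?O) \<longleftrightarrow> x = Min ?O" using inj_on_eq_iff[OF inj xc mc] .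
  show ?thesis unfolding box_weight_def orbit_glue[OF p g j x] card cycle_min eq ..
qed

lemma perm_weight_split_cols:
  assumes p: "is_partition lam" and s: "\<sigma> \<in> col_perms lam"
  shows "perm_weight lam q \<sigma> = (\<Prod>j\<in>cols lam. \<Prod>i\<in>{1..conj_part lam j}. box_weight q \<sigma> (i, j))"
proof -
  have inj: "inj_on (\<lambda>(j, i). (i, j)) (Sigma (cols lam) (\<lambda>j. {1..conj_part lam j}))"
    by (rule inj_onI) auto
  have "perm_weight lam q \<sigma> = (\<Prod>b\<in>boxes lam. box_weight q \<sigma> b)" using perm_weight_eq_prod[OF s] .
  also have "\<dots> = (\<Prod>(j, i)\<in>Sigma (cols lam) (\<lambda>j. {1..conj_part lam j}). box_weight q \<sigma> (i, j))"
    unfolding boxes_by_columns[OF p] prod.reindex[OF inj] by (simp add: case_prod_beta o_def)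
  also have "\<dots> = (\<Prod>j\<in>cols lam. \<Prod>i\<in>{1..conj_part lam j}. box_weight q \<sigma> (i, j))"
    by (rule prod.Sigma[symmetric]) auto
  finally show ?thesis .
qed

lemma perm_weight_col:
  assumes s: "\<tau> \<in> col_perms (replicate m 1)"
  shows "perm_weight (replicate m 1) q \<tau> = (\<Prod>i\<in>{1..m}. box_weight q \<tau> (i, 1))"
proof -
  have inj: "inj_on (\<lambda>i. (i, 1::nat)) {1..m}" by (rule inj_onI) auto
  show ?thesis using perm_weight_eq_prod[OF s] unfolding boxes_col col_boxes_def prod.reindex[OF inj] by (simp add: o_def)
qed

lemma perm_weight_glue:
  assumes p: "is_partition lam" and g: "g \<in> PiE (cols lam) (col_perm_set lam)"
  shows "perm_weight lam q (glue lam g) = (\<Prod>j\<in>cols lam. perm_weight (replicate (conj_part lam j) 1) q (g j))"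
proof -
  have "perm_weight lam q (glue lam g) = (\<Prod>j\<in>cols lam. \<Prod>i\<in>{1..conj_part lam j}. box_weight q (glue lam g) (i, j))"
    using perm_weight_split_cols[OF p glue_in_col_perms[OF p g]] .
  also have "\<dots> = (\<Prod>j\<in>cols lam. \<Prod>i\<in>{1..conj_part lam j}. box_weight q (g j) (i, 1))"
  proof (rule prod.cong[OF refl], rule prod.cong[OF refl])
    fix j i assume j: "j \<in> cols lam" and i: "i \<in> {1..conj_part lam j}"
    have x: "(i, 1) \<in> col_boxes (conj_part lam j)" using i unfolding col_boxes_def by auto
    show "box_weight q (glue lam g) (i, j) = box_weight q (g j) (i, 1)" using box_weight_glue[OF p g j x] by (simp add: to_col_def)
  qed
  also have "\<dots> = (\<Prod>j\<in>cols lam. perm_weight (replicate (conj_part lam j) 1) q (g j))"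
    using perm_weight_col g by (auto simp: PiE_iff intro!: prod.cong)
  finally show ?thesis .
qed

lemma finite_col_perms_col: "finite (col_perms (replicate m 1))"
  unfolding col_perms_col using finite_permutations[OF finite_col_boxes] .

lemma sum_col_perms_eq_prod:
  assumes p: "is_partition lam"
  shows "(\<Sum>\<sigma>\<in>col_perms lam. perm_weight lam q \<sigma>) =
    (\<Prod>j\<in>cols lam. \<Sum>\<tau>\<in>col_perm_set lam j. perm_weight (replicate (conj_part lam j) 1) q \<tau>)"
proof -
  have "(\<Sum>\<sigma>\<in>col_perms lam. perm_weight lam q \<sigma>) = (\<Sum>g\<in>PiE (cols lam) (col_perm_set lam). perm_weight lam q (glue lam g))"
    by (rule sum.reindex_bij_betw[OF bij_betw_glue[OF p], symmetric])
  also have "\<dots> = (\<Sum>g\<in>PiE (cols lam) (col_perm_set lam). \<Prod>j\<in>cols lam. perm_weight (replicate (conj_part lam j) 1) q (g j))"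
    using perm_weight_glue[OF p] by simp
  also have "\<dots> = (\<Prod>j\<in>cols lam. \<Sum>\<tau>\<in>col_perm_set lam j. perm_weight (replicate (conj_part lam j) 1) q \<tau>)"
  proof (rule prod_sum_PiE[symmetric])
    show "finite (cols lam)" by simp
    show "\<And>j. j \<in> cols lam \<Longrightarrow> finite (col_perm_set lam j)" by (rule finite_col_perms_col)
  qed
  finally show ?thesis .
qed

theorem mainTheorem9:
  fixes lam :: "nat list" and th :: "dmap \<Rightarrow> nat" and p :: "nat \<Rightarrow> int"
  assumes "is_partition lam"
    and "nonorient_stat th"
  shows "Fa 0 lam th p = (\<Prod>i = 1..ncols lam. Fa 0 (replicate (conj_part lam i) 1) th p)"
  using Fa_0_eq_sum_col_perms[OF assms(2)] sum_col_perms_eq_prod[OF assms(1)] by simp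

end
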